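(* Let $\nu=(\nu_1,\dots,\nu_\ell)$ be an integer partition. Then there exist rational numbers $\xi_\delta$, indexed by integer partitions $\delta$ with $|\delta|\le|\nu|-1$, such that for every strict partition $\lambda$, $$D\Bigl(\frac{q_\nu(\lambda)}{H_\lambda}\Bigr)=\sum_{|\delta|\le|\nu|-1}\xi_\delta\,\frac{q_\delta(\lambda)}{H_\lambda}.$$
   Context: A strict partition is a finite strictly decreasing sequence of positive integers $\lambda=(\lambda_1>\cdots>\lambda_\ell)$ (the empty sequence is allowed); $\ell(\lambda)=\ell$, and $\lambda_i=0$ for $i>\ell(\lambda)$. The (shifted Young) diagram of $\lambda$ is the set of boxes $(i,j)$ with $1\le i\le\ell(\lambda)$, $i+1\le j\le i+\lambda_i$ (row $i$, column $j$); $\lambda$ is identified with its diagram. The hook length $h_\square$ of $\square=(i,j)\in\lambda$ is the number of boxes of $\lambda$ in row $i$ strictly to the right of $\square$, plus the number of boxes $(i',j)\in\lambda$ with $i'>i$, plus $1$, plus $\lambda_j$; $H_\lambda=\prod_{\square\in\lambda}h_\square$ ($H_\emptyset=1$). An outer corner of $\lambda$ is a box of $\lambda$ whose removal leaves the diagram of a strict partition. Let $(\alpha_1,\beta_1),\dots,(\alpha_m,\beta_m)$ be the outer corners with $\alpha_1>\cdots>\alpha_m$, and $y_j=\beta_j-\alpha_j$. Set $\alpha_{m+1}=0$, $\beta_0=\ell(\lambda)+1$, and $x_i=\beta_i-\alpha_{i+1}$ for $0\le i\le m$. For $k\ge0$, $q_k(\lambda)=\sum_{i=0}^m\binom{x_i}{2}^k-\sum_{i=1}^m\binom{y_i}{2}^k$,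 and for an integer partition $\nu=(\nu_1,\dots,\nu_\ell)$, $q_\nu(\lambda)=\prod_{j=1}^\ell q_{\nu_j}(\lambda)$ ($q_\emptyset=1$). $\lambda^+$ ranges over strict partitions obtained from $\lambda$ by adding one box; the difference operator is $DG(\lambda)=\sum_{\lambda^+:\ell(\lambda^+)>\ell(\lambda)}G(\lambda^+)+2\sum_{\lambda^+:\ell(\lambda^+)=\ell(\lambda)}G(\lambda^+)-G(\lambda)$. *)

theory Defs
  imports Complex_Main
begin

definition strict_partition :: "nat list \<Rightarrow> bool" where
  "strict_partition lam \<longleftrightarrow> sorted_wrt (>) lam \<and> (\<forall>x\<in>set lam. 0 < x)"

definition int_partition :: "nat list \<Rightarrow> bool" where
  "int_partition nu \<longleftrightarrow> sorted_wrt (\<ge>) nu \<and> (\<forall>x\<in>set nu. 0 < x)"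

text \<open>1-indexed parts, with lambda_i = 0 for i > length.\<close>
definition part :: "nat list \<Rightarrow> nat \<Rightarrow> nat" where
  "part lam i = (if 1 \<le> i \<and> i \<le> length lam then lam ! (i - 1) else 0)"

definition diagram :: "nat list \<Rightarrow> (nat \<times> nat) set" where
  "diagram lam = {(i, j). 1 \<le> i \<and> i \<le> length lam \<and> i + 1 \<le> j \<and> j \<le> i + part lam i}"

definition hook :: "nat list \<Rightarrow> nat \<times> nat \<Rightarrow> nat" where
  "hook lam b = (case b of (i, j) \<Rightarrow>
      card {j'. (i, j') \<in> diagram lam \<and> j' > j}
    + card {i'. (i', j) \<in> diagram lam \<and> i' > i}
    + 1 + part lam j)"

definition H :: "nat list \<Rightarrow> rat" where
  "H lam = (\<Prod>b\<in>diagram lam. of_nat (hook lam b))"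

definition outer_corners :: "nat list \<Rightarrow> (nat \<times> nat) set" where
  "outer_corners lam = {b \<in> diagram lam. \<exists>mu. strict_partition mu \<and> diagram mu = diagram lam - {b}}"

definition corner_rows :: "nat list \<Rightarrow> nat list" where
  "corner_rows lam = rev (sorted_list_of_set (fst ` outer_corners lam))"

definition n_corners :: "nat list \<Rightarrow> nat" where
  "n_corners lam = card (outer_corners lam)"

definition alpha :: "nat list \<Rightarrow> nat \<Rightarrow> int" where
  "alpha lam i = (if 1 \<le> i \<and> i \<le> n_corners lam then int (corner_rows lam ! (i - 1)) else 0)"

definition beta :: "nat list \<Rightarrow> nat \<Rightarrow> int" where
  "beta lam i = (if i = 0 then int (length lam) + 1
     else int (THE j. (corner_rows lam ! (i - 1), j) \<in> outer_corners lam))"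

definition xcoord :: "nat list \<Rightarrow> nat \<Rightarrow> int" where
  "xcoord lam i = beta lam i - alpha lam (i + 1)"

definition ycoord :: "nat list \<Rightarrow> nat \<Rightarrow> int" where
  "ycoord lam j = beta lam j - alpha lam j"

definition q :: "nat \<Rightarrow> nat list \<Rightarrow> rat" where
  "q k lam = (\<Sum>i = 0..n_corners lam. ((of_int (xcoord lam i) :: rat) gchoose 2) ^ k)
           - (\<Sum>i = 1..n_corners lam. ((of_int (ycoord lam i) :: rat) gchoose 2) ^ k)"

definition q_part :: "nat list \<Rightarrow> nat list \<Rightarrow> rat" where
  "q_part nu lam = (\<Prod>j<length nu. q (nu ! j) lam)"

definition add_box :: "nat list \<Rightarrow> nat list set" where
  "add_box lam = {mu. strict_partition mu \<and> diagram lam \<subseteq> diagram mu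
                      \<and> card (diagram mu - diagram lam) = 1}"

definition Dop :: "(nat list \<Rightarrow> rat) \<Rightarrow> nat list \<Rightarrow> rat" where
  "Dop G lam = (\<Sum>mu\<in>{mu\<in>add_box lam. length mu > length lam}. G mu)
             + 2 * (\<Sum>mu\<in>{mu\<in>add_box lam. length mu = length lam}. G mu)
             - G lam"

end

theory Submission
  imports Defs "HOL-Computational_Algebra.Polynomial_FPS"
begin

text \<open>
  Both \<open>H(\<lambda>)\<close> and \<open>q\<^sub>k(\<lambda>)\<close> depend only on the set \<open>S\<close> of parts of \<open>\<lambda>\<close>: with
  \<open>T(a) = a(a + 1)/2\<close>,
    \<open>H(\<lambda>) = \<Prod>(a \<in> S) a! \<Prod>(b \<in> S, b < a) (a + b)/(a - b)\<close>  and
    \<open>q\<^sub>k(\<lambda>) = \<Sum>(a \<in> S) T(a)\<^sup>k - T(a - 1)\<^sup>k\<close>.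
  Adding a box replaces some \<open>a \<in> S \<union> {0}\<close> by \<open>a + 1\<close>, and the weight of \<open>D\<close> times
  \<open>H(\<lambda>)/H(\<lambda>\<^sup>+)\<close> is exactly the coefficient \<open>r\<^sub>a\<close> of \<open>1/(z - T(a))\<close> in the partial fraction
  expansion of \<open>\<Prod>(b \<in> S) (z - T(b - 1)) / \<Prod>(a \<in> S \<union> {0}) (z - T(a))\<close>. Since \<open>\<Sum>\<^sub>a r\<^sub>a = 1\<close>,
  \<open>H(\<lambda>) \<cdot> D(q\<^sub>\<nu>/H)(\<lambda>) = \<Sum>\<^sub>a r\<^sub>a (\<Prod>\<^sub>k (q\<^sub>k + \<Delta>\<^sub>k(a)) - \<Prod>\<^sub>k q\<^sub>k)\<close>, where the second
  difference \<open>\<Delta>\<^sub>k(a)\<close> of \<open>T(a)\<^sup>k\<close> is a polynomial of degree \<open>k - 1\<close> in \<open>T(a)\<close>. Finally the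
  moments \<open>\<Sum>\<^sub>a r\<^sub>a T(a)\<^sup>d\<close> satisfy Newton's identities with the power sums \<open>q\<^sub>k\<close>, so they are
  polynomials in the \<open>q\<^sub>k\<close> of weight \<open>d\<close>. Counting weights gives \<open>|\<delta>| \<le> |\<nu>| - 1\<close>.
\<close>

section \<open>Strict partitions and hook lengths\<close>

lemma strict_partition_nth_Suc_less:
  assumes "strict_partition l" "Suc k < length l"
  shows "l ! Suc k < l ! k"
  using assms unfolding Defs.strict_partition_def sorted_wrt_iff_nth_less by auto

lemma strict_partition_nth_gap:
  assumes "strict_partition l" "i + d < length l"
  shows "l ! (i + d) + d \<le> l ! i"
  using assms(2)
proof (induction d)
  case (Suc d)
  have "l ! Suc (i + d) < l ! (i + d)" using strict_partition_nth_Suc_less[OF assms(1)] Suc.prems by simp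
  with Suc show ?case by simp
qed simp

lemma part_gap:
  assumes "strict_partition l" "1 \<le> i" "i \<le> j" "j \<le> length l"
  shows "part l j + (j - i) \<le> part l i"
proof -
  have "l ! ((i - 1) + (j - i)) + (j - i) \<le> l ! (i - 1)"
    using strict_partition_nth_gap[OF assms(1), of "i - 1" "j - i"] assms by simp
  moreover have "(i - 1) + (j - i) = j - 1" using assms by simp
  ultimately show ?thesis using assms unfolding Defs.part_def by auto
qed

lemma part_pos:
  assumes "strict_partition l" "1 \<le> i" "i \<le> length l"
  shows "0 < part l i"
  using assms unfolding Defs.strict_partition_def Defs.part_def by auto

lemma part_zero: "length l < i \<Longrightarrow> part l i = 0"
  unfolding Defs.part_def by auto

lemma mem_diagram: "(i, j) \<in> diagram l \<longleftrightarrow> 1 \<le> i \<and> i \<le> length l \<and> i + 1 \<le> j \<and> j \<le> i + part l i"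
  unfolding Defs.diagram_def by auto

lemma mem_diagram_iff_part: "(i, j) \<in> diagram l \<longleftrightarrow> 1 \<le> i \<and> i + 1 \<le> j \<and> j \<le> i + part l i"
  unfolding mem_diagram using part_zero[of l i] by (cases "i \<le> length l") auto

lemma diagram_Sigma: "diagram l = Sigma {1..length l} (\<lambda>i. {i<..i + part l i})"
  by (auto simp: mem_diagram)

definition leg_rows :: "nat list \<Rightarrow> nat \<Rightarrow> nat \<Rightarrow> nat set" where
  "leg_rows l i j = {i'. i < i' \<and> i' \<le> length l \<and> j \<le> i' + part l i'}"

lemma finite_leg_rows: "finite (leg_rows l i j)"
  unfolding leg_rows_def by (rule finite_subset[of _ "{..length l}"]) auto

lemma leg_rows_antimono: "j \<le> j' \<Longrightarrow> leg_rows l i j' \<subseteq> leg_rows l i j"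
  unfolding leg_rows_def by auto

context
  fixes l :: "nat list"
  assumes sp: "strict_partition l"
begin

lemma part_strict_antimono:
  assumes "1 \<le> x" "x < y" "y \<le> length l"
  shows "part l y < part l x"
  using part_gap[OF sp, of x y] assms by auto

lemma part_inj: "inj_on (part l) {1..length l}"
proof (rule inj_onI)
  fix x y assume "x \<in> {1..length l}" "y \<in> {1..length l}" "part l x = part l y"
  then show "x = y"
    using part_strict_antimono[of x y] part_strict_antimono[of y x] by (cases x y rule: linorder_cases) auto
qed

lemma set_eq_part_image: "set l = part l ` {1..length l}"
proof (intro set_eqI iffI)
  fix b assume "b \<in> set l"
  then obtain k where "k < length l" "l ! k = b" by (auto simp: in_set_conv_nth)
  then show "b \<in> part l ` {1..length l}" unfolding Defs.part_def
    by (intro image_eqI[of _ _ "Suc k"]) auto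
qed (auto simp: Defs.part_def)

lemma part_image_below:
  assumes "1 \<le> i" "i \<le> length l"
  shows "part l ` {i<..length l} = {b \<in> set l. b < part l i}"
proof (intro set_eqI iffI)
  fix b assume "b \<in> part l ` {i<..length l}"
  then show "b \<in> {b \<in> set l. b < part l i}"
    using part_strict_antimono[of i] assms set_eq_part_image by auto
next
  fix b assume b: "b \<in> {b \<in> set l. b < part l i}"
  then obtain x where x: "x \<in> {1..length l}" "b = part l x" using set_eq_part_image by auto
  have "i < x"
  proof (rule ccontr)
    assume "\<not> i < x"
    then have "part l i \<le> part l x" using part_strict_antimono[of x i] x assms by (cases "x = i") auto
    then show False using b x by auto
  qed
  then show "b \<in> part l ` {i<..length l}" using x by auto
qed


lemma card_arm:
  assumes "(i, j) \<in> diagram l"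
  shows "card {j'. (i, j') \<in> diagram l \<and> j' > j} = i + part l i - j"
proof -
  have "{j'. (i, j') \<in> diagram l \<and> j' > j} = {j<..i + part l i}"
    using assms by (auto simp: mem_diagram)
  then show ?thesis by simp
qed

lemma row_end_antimono:
  assumes "1 \<le> i" "i \<le> j" "j \<le> length l"
  shows "j + part l j \<le> i + part l i"
  using part_gap[OF sp assms] assms by simp

lemma hook_inner:
  assumes "(i, j) \<in> diagram l" "j \<le> length l"
  shows "hook l (i, j) = part l i + part l j"
proof -
  have "{i'. (i', j) \<in> diagram l \<and> i' > i} = {i<..<j}"
  proof (intro set_eqI iffI)
    fix x assume x: "x \<in> {i<..<j}"
    then have "j + part l j \<le> x + part l x" using row_end_antimono[of x j] assms by (auto simp: mem_diagram)
    then show "x \<in> {i'. (i', j) \<in> diagram l \<and> i' > i}" using x assms by (auto simp: mem_diagram)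
  qed (auto simp: mem_diagram)
  then show ?thesis
    using card_arm[OF assms(1)] assms unfolding Defs.hook_def by (auto simp: mem_diagram)
qed

lemma hook_outer:
  assumes "(i, j) \<in> diagram l" "length l < j"
  shows "hook l (i, j) = i + part l i - j + card (leg_rows l i j) + 1"
proof -
  have "{i'. (i', j) \<in> diagram l \<and> i' > i} = leg_rows l i j"
    using assms unfolding leg_rows_def by (auto simp: mem_diagram)
  then show ?thesis using card_arm[OF assms(1)] assms part_zero[of l j]
    unfolding Defs.hook_def by simp
qed

lemma leg_rows_down_closed:
  assumes "x \<in> leg_rows l i j" "i < y" "y \<le> x"
  shows "y \<in> leg_rows l i j"
  using assms row_end_antimono[of y x] unfolding leg_rows_def by auto

lemma leg_rows_le:
  assumes "x \<in> leg_rows l i j"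
  shows "x \<le> i + card (leg_rows l i j)"
proof -
  have "{i<..x} \<subseteq> leg_rows l i j" using leg_rows_down_closed[OF assms] by auto
  then have "card {i<..x} \<le> card (leg_rows l i j)" by (intro card_mono finite_leg_rows)
  then show ?thesis using assms unfolding leg_rows_def by auto
qed

lemma leg_rows_gt:
  assumes "x \<notin> leg_rows l i j" "i < x" "x \<le> length l"
  shows "i + card (leg_rows l i j) < x"
proof -
  have "leg_rows l i j \<subseteq> {i<..<x}"
    using leg_rows_down_closed[of _ i j x] assms by (force simp: leg_rows_def)
  then have "card (leg_rows l i j) \<le> card {i<..<x}" by (intro card_mono) auto
  then show ?thesis using assms by auto
qed

lemma length_lt_row_end:
  assumes "1 \<le> i" "i \<le> length l"
  shows "length l < i + part l i"
  using part_gap[OF sp, of i "length l"] part_pos[OF sp, of "length l"] assms by auto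

lemma card_leg_rows_le:
  "card (leg_rows l i j) \<le> length l - i"
proof -
  have "card (leg_rows l i j) \<le> card {i<..length l}"
    by (rule card_mono) (auto simp: leg_rows_def)
  then show ?thesis by simp
qed

context
  fixes i :: nat
  assumes i: "1 \<le> i" "i \<le> length l"
begin

lemma hook_outer_bounds:
  assumes "length l < j" "j \<le> i + part l i"
  shows "hook l (i, j) \<in> {1..part l i}"
  using hook_outer[of i j] card_leg_rows_le[of i j] assms i by (auto simp: mem_diagram)

lemma hook_outer_strict_antimono:
  assumes "length l < j" "j < j'" "j' \<le> i + part l i"
  shows "hook l (i, j') < hook l (i, j)"
proof -
  have "card (leg_rows l i j') \<le> card (leg_rows l i j)"
    using assms by (intro card_mono finite_leg_rows leg_rows_antimono) auto
  then show ?thesis using hook_outer[of i j] hook_outer[of i j'] assms i by (auto simp: mem_diagram)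
qed

lemma hook_outer_ne_part_diff:
  assumes j: "length l < j" "j \<le> i + part l i" and x: "i < x" "x \<le> length l"
  shows "hook l (i, j) \<noteq> part l i - part l x"
proof -
  have hook: "hook l (i, j) = i + part l i - j + card (leg_rows l i j) + 1"
    using hook_outer[of i j] j i by (auto simp: mem_diagram)
  have gap: "part l x + (x - i) \<le> part l i" using part_gap[OF sp, of i x] i x by simp
  show ?thesis
  proof (cases "x \<in> leg_rows l i j")
    case True
    then have "x \<le> i + card (leg_rows l i j)" "j \<le> x + part l x"
      using leg_rows_le by (auto simp: leg_rows_def)
    then show ?thesis using hook gap x by auto
  next
    case False
    then have "i + card (leg_rows l i j) < x" "x + part l x < j"
      using leg_rows_gt[OF False] x by (auto simp: leg_rows_def)
    then show ?thesis using hook gap x j by auto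
  qed
qed

lemma inj_on_part_diff: "inj_on (\<lambda>x. part l i - part l x) {i<..length l}"
proof (rule inj_onI)
  fix x y assume xy: "x \<in> {i<..length l}" "y \<in> {i<..length l}" "part l i - part l x = part l i - part l y"
  then have "part l x = part l y" using part_strict_antimono[of i x] part_strict_antimono[of i y] i by auto
  then show "x = y" using inj_onD[OF part_inj] xy i by auto
qed

lemma hook_outer_bij_betw:
  "bij_betw (\<lambda>j. hook l (i, j)) {length l<..i + part l i}
     ({1..part l i} - (\<lambda>x. part l i - part l x) ` {i<..length l})"
proof -
  define J where "J = {length l<..i + part l i}"
  define D where "D = (\<lambda>x. part l i - part l x) ` {i<..length l}"
  have inj: "inj_on (\<lambda>j. hook l (i, j)) J"
  proof (rule inj_onI)
    fix x y assume "x \<in> J" "y \<in> J" "hook l (i, x) = hook l (i, y)"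
    then show "x = y" unfolding J_def
      using hook_outer_strict_antimono[of x y] hook_outer_strict_antimono[of y x]
      by (cases x y rule: linorder_cases) auto
  qed
  have sub: "(\<lambda>j. hook l (i, j)) ` J \<subseteq> {1..part l i} - D"
    unfolding J_def D_def using hook_outer_bounds hook_outer_ne_part_diff by fastforce
  have D_sub: "D \<subseteq> {1..part l i}"
    unfolding D_def using part_strict_antimono[of i] i by fastforce
  have "card ({1..part l i} - D) = part l i - (length l - i)"
    using card_Diff_subset[OF finite_subset[OF D_sub] D_sub] card_image[OF inj_on_part_diff]
    unfolding D_def by simp
  also have "\<dots> = card ((\<lambda>j. hook l (i, j)) ` J)"
    using card_image[OF inj] length_lt_row_end[OF i] i unfolding J_def by simp
  finally have "(\<lambda>j. hook l (i, j)) ` J = {1..part l i} - D"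
    using card_subset_eq[OF _ sub] by auto
  with inj show ?thesis unfolding bij_betw_def J_def D_def by simp
qed

lemma prod_hook_outer:
  "(\<Prod>j\<in>{length l<..i + part l i}. (of_nat (hook l (i, j)) :: rat))
     = fact (part l i) / (\<Prod>x\<in>{i<..length l}. of_nat (part l i - part l x))"
proof -
  define D where "D = (\<lambda>x. part l i - part l x) ` {i<..length l}"
  have D_sub: "D \<subseteq> {1..part l i}"
    unfolding D_def using part_strict_antimono[of i] i by fastforce
  have "(\<Prod>j\<in>{length l<..i + part l i}. (of_nat (hook l (i, j)) :: rat))
      = (\<Prod>v\<in>{1..part l i} - D. of_nat v)"
    using prod.reindex_bij_betw[OF hook_outer_bij_betw, of "of_nat :: nat \<Rightarrow> rat"] unfolding D_def .
  also have "\<dots> = (\<Prod>v\<in>{1..part l i}. of_nat v) / (\<Prod>v\<in>D. of_nat v)"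
  proof -
    have "(\<Prod>v\<in>{1..part l i}. (of_nat v :: rat)) = (\<Prod>v\<in>{1..part l i} - D. of_nat v) * (\<Prod>v\<in>D. of_nat v)"
      by (rule prod.subset_diff[OF D_sub]) simp
    moreover have "(\<Prod>v\<in>D. (of_nat v :: rat)) \<noteq> 0"
      using D_sub by (auto simp: prod_zero_iff finite_subset)
    ultimately show ?thesis by simp
  qed
  also have "(\<Prod>v\<in>D. (of_nat v :: rat)) = (\<Prod>x\<in>{i<..length l}. of_nat (part l i - part l x))"
    unfolding D_def using prod.reindex[OF inj_on_part_diff, of "of_nat :: nat \<Rightarrow> rat"] by simp
  finally show ?thesis by (simp add: fact_prod)
qed

lemma prod_hook_row:
  "(\<Prod>j\<in>{i<..i + part l i}. (of_nat (hook l (i, j)) :: rat))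
     = fact (part l i) * (\<Prod>x\<in>{i<..length l}.
         (of_nat (part l i) + of_nat (part l x)) / (of_nat (part l i) - of_nat (part l x)))"
proof -
  define a where "a = part l i"
  define n where "n = length l"
  have le: "part l x \<le> a" if "x \<in> {i<..n}" for x
    using part_gap[OF sp, of i x] that i unfolding a_def n_def by auto
  have split: "{i<..i + a} = {i<..n} \<union> {n<..i + a}"
    using length_lt_row_end[OF i] i unfolding n_def a_def by auto
  have "(\<Prod>j\<in>{i<..i + a}. (of_nat (hook l (i, j)) :: rat))
      = (\<Prod>j\<in>{i<..n}. of_nat (hook l (i, j))) * (\<Prod>j\<in>{n<..i + a}. of_nat (hook l (i, j)))"
    unfolding split by (rule prod.union_disjoint) auto
  also have "(\<Prod>j\<in>{i<..n}. (of_nat (hook l (i, j)) :: rat)) = (\<Prod>j\<in>{i<..n}. of_nat a + of_nat (part l j))"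
  proof (rule prod.cong)
    fix j assume j: "j \<in> {i<..n}"
    then have "(i, j) \<in> diagram l" using length_lt_row_end[OF i] i unfolding n_def a_def by (auto simp: mem_diagram)
    then show "(of_nat (hook l (i, j)) :: rat) = of_nat a + of_nat (part l j)"
      using hook_inner j unfolding a_def n_def by auto
  qed simp
  also have "(\<Prod>j\<in>{n<..i + a}. (of_nat (hook l (i, j)) :: rat))
      = fact a / (\<Prod>x\<in>{i<..n}. of_nat a - of_nat (part l x))"
    using prod_hook_outer le unfolding a_def n_def by (simp add: of_nat_diff)
  finally show ?thesis unfolding a_def[symmetric] n_def[symmetric] by (simp add: prod_dividef)
qed

end

end

definition H_set :: "nat set \<Rightarrow> rat" where
  "H_set S = (\<Prod>a\<in>S. fact a * (\<Prod>b\<in>{b\<in>S. b < a}. (of_nat a + of_nat b) / (of_nat a - of_nat b)))"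

lemma H_eq_H_set:
  assumes sp: "strict_partition l"
  shows "H l = H_set (set l)"
proof -
  define \<rho> :: "nat \<Rightarrow> nat \<Rightarrow> rat"
    where "\<rho> a b = (of_nat a + of_nat b) / (of_nat a - of_nat b)" for a b
  have "H l = (\<Prod>i\<in>{1..length l}. \<Prod>j\<in>{i<..i + part l i}. (of_nat (hook l (i, j)) :: rat))"
    unfolding Defs.H_def diagram_Sigma by (subst prod.Sigma) auto
  also have "\<dots> = (\<Prod>i\<in>{1..length l}. fact (part l i) * (\<Prod>x\<in>{i<..length l}. \<rho> (part l i) (part l x)))"
    using prod_hook_row[OF sp] unfolding \<rho>_def by (intro prod.cong) auto
  also have "\<dots> = (\<Prod>i\<in>{1..length l}. fact (part l i) * (\<Prod>b\<in>{b \<in> set l. b < part l i}. \<rho> (part l i) b))"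
  proof (rule prod.cong)
    fix i assume i: "i \<in> {1..length l}"
    have inj: "inj_on (part l) {i<..length l}" by (rule inj_on_subset[OF part_inj[OF sp]]) (use i in auto)
    show "fact (part l i) * (\<Prod>x\<in>{i<..length l}. \<rho> (part l i) (part l x))
      = fact (part l i) * (\<Prod>b\<in>{b \<in> set l. b < part l i}. \<rho> (part l i) b)"
      using prod.reindex[OF inj, of "\<rho> (part l i)"] part_image_below[OF sp, of i] i by simp
  qed simp
  also have "\<dots> = H_set (set l)"
    unfolding H_set_def \<rho>_def[symmetric] set_eq_part_image[OF sp]
    using prod.reindex[OF part_inj[OF sp], of "\<lambda>a. fact a * (\<Prod>b\<in>{b \<in> set l. b < a}. \<rho> a b)"]
    by (simp add: set_eq_part_image[OF sp])
  finally show ?thesis .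
qed

section \<open>Outer corners and the functions \<open>q\<^sub>k\<close>\<close>

lemma part_Suc_le:
  assumes "strict_partition l" "1 \<le> i"
  shows "part l (Suc i) \<le> part l i \<and> (0 < part l i \<longrightarrow> part l (Suc i) < part l i)"
proof (cases "Suc i \<le> length l")
  case True
  then show ?thesis using part_gap[OF assms(1), of i "Suc i"] assms by auto
next
  case False
  then show ?thesis using part_zero[of l "Suc i"] by auto
qed

lemma strict_partitionI_nth:
  assumes "\<And>k. Suc k < length L \<Longrightarrow> L ! Suc k < L ! k" "\<And>x. x \<in> set L \<Longrightarrow> 0 < x"
  shows "strict_partition L"
  unfolding Defs.strict_partition_def using assms
  by (subst sorted_wrt_iff_nth_Suc_transp) (auto simp: transp_def)

definition corner_rows_set :: "nat list \<Rightarrow> nat set" where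
  "corner_rows_set l = {i. 1 \<le> i \<and> i \<le> length l \<and> (i = length l \<or> part l (Suc i) + 1 < part l i)}"

lemma finite_corner_rows_set: "finite (corner_rows_set l)"
  unfolding corner_rows_set_def by (rule finite_subset[of _ "{..length l}"]) auto

lemma part_update:
  assumes "1 \<le> i" "i \<le> length l"
  shows "part (l[i - 1 := v]) r = (if r = i then v else part l r)"
  using assms unfolding Defs.part_def by (auto simp: nth_list_update)

definition row_end :: "nat list \<Rightarrow> nat \<Rightarrow> int" where
  "row_end l r = int r + int (part l r)"

definition tri :: "nat \<Rightarrow> rat" where
  "tri a = of_nat a * (of_nat a + 1) / 2"

definition q_set :: "nat \<Rightarrow> nat set \<Rightarrow> rat" where
  "q_set k S = (\<Sum>a\<in>S. tri a ^ k - tri (a - 1) ^ k)"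

lemma gchoose_2: "(x::rat) gchoose 2 = x * (x - 1) / 2"
  by (simp add: gbinomial_prod_rev numeral_2_eq_2)

lemma tri_strict_mono: "a < b \<Longrightarrow> tri a < tri b"
proof -
  assume "a < b"
  then have "a * (a + 1) < b * (b + 1)" by (intro mult_strict_mono) auto
  then have "(of_nat (a * (a + 1)) :: rat) < of_nat (b * (b + 1))" by (simp only: of_nat_less_iff)
  then have "(of_nat a * (of_nat a + 1) :: rat) < of_nat b * (of_nat b + 1)" by (simp add: algebra_simps)
  then show ?thesis unfolding tri_def by (simp add: divide_strict_right_mono)
qed

lemma inj_tri: "inj tri"
  by (rule injI) (metis tri_strict_mono less_irrefl nat_neq_iff)

lemma tri_0: "tri 0 = 0"
  unfolding tri_def by simp

lemma tri_Suc: "tri (a + 1) = (of_nat a + 1) + tri a" unfolding tri_def by (simp add: field_simps)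
lemma tri_pred: "tri (a - 1) = (- of_nat a) + tri a"
  by (cases a) (simp_all add: tri_def field_simps)

lemma tri_diff: "tri a - tri b = (of_nat a - of_nat b) * (of_nat a + of_nat b + 1) / 2"
  unfolding tri_def by (simp add: field_simps)

lemma tri_diff_pred: "1 \<le> b \<Longrightarrow> tri a - tri (b - 1) = (of_nat a - of_nat b + 1) * (of_nat a + of_nat b) / 2"
  unfolding tri_def by (simp add: field_simps of_nat_diff)

lemma sum_atLeast1_shift: "(\<Sum>s\<in>{1..m::nat}. h (s - 1)) = (\<Sum>p<m. (h p :: 'a::comm_monoid_add))"
  by (induction m) (auto simp: atLeastAtMostSuc_conv add.commute)

lemma sum_nth_distinct:
  assumes "distinct xs"
  shows "(\<Sum>p<length xs. g (xs ! p)) = (\<Sum>c\<in>set xs. (g c :: 'a::comm_monoid_add))"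
proof -
  have inj: "inj_on (nth xs) {..<length xs}" using assms by (auto simp: inj_on_def distinct_conv_nth)
  have "set xs = nth xs ` {..<length xs}" by (auto simp: set_conv_nth)
  then show ?thesis using sum.reindex[OF inj, of g] by simp
qed

lemma sum_telescope_shift: "(\<Sum>r\<in>{1..n::nat}. u r) + u 0 = (\<Sum>r\<in>{1..n}. u (r - 1)) + (u n :: 'a::comm_monoid_add)"
proof (induction n)
  case (Suc n)
  have "(\<Sum>r\<in>{1..Suc n}. u r) + u 0 = u (Suc n) + ((\<Sum>r\<in>{1..n}. u r) + u 0)"
    by (simp add: atLeastAtMostSuc_conv add_ac)
  also have "\<dots> = u (Suc n) + ((\<Sum>r\<in>{1..n}. u (r - 1)) + u n)" using Suc.IH by simp
  also have "\<dots> = (\<Sum>r\<in>{1..Suc n}. u (r - 1)) + u (Suc n)"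
    by (simp add: atLeastAtMostSuc_conv add_ac)
  finally show ?case .
qed simp

context
  fixes l :: "nat list"
  assumes sp: "strict_partition l"
begin

lemma outer_cornerD:
  assumes "(i, j) \<in> outer_corners l"
  shows "i \<in> corner_rows_set l \<and> j = i + part l i"
proof -
  from assms obtain mu where b: "(i, j) \<in> diagram l" and mu: "strict_partition mu" "diagram mu = diagram l - {(i, j)}"
    unfolding Defs.outer_corners_def by auto
  have i: "1 \<le> i" "i \<le> length l" using b by (auto simp: mem_diagram)
  have rowcard: "card {c. (r, c) \<in> diagram L} = part L r" if "1 \<le> r" for r L
  proof -
    have "{c. (r, c) \<in> diagram L} = {r<..r + part L r}" using that by (auto simp: mem_diagram_iff_part)
    then show ?thesis by simp
  qed
  have eqrow: "{c. (r, c) \<in> diagram mu} = {c. (r, c) \<in> diagram l} - (if r = i then {j} else {})" for r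
    using mu(2) by auto
  have pmu: "part mu r = (if r = i then part l i - 1 else part l r)" if "1 \<le> r" for r
    using eqrow[of r] rowcard[OF that, of mu] rowcard[OF that, of l] b
    by (cases "r = i") (simp_all add: card_Diff_singleton_if)
  have jeq: "j = i + part l i"
  proof (rule ccontr)
    assume ne: "j \<noteq> i + part l i"
    have "(i, i + part l i) \<in> diagram l" using part_pos[OF sp i] i by (auto simp: mem_diagram_iff_part)
    then have "(i, i + part l i) \<in> diagram mu" using mu(2) ne by auto
    then show False using pmu[OF i(1)] part_pos[OF sp i] by (auto simp: mem_diagram_iff_part)
  qed
  have "i = length l \<or> part l (Suc i) + 1 < part l i"
  proof (cases "i = length l")
    case False
    then have "0 < part l (Suc i)" using part_pos[OF sp, of "Suc i"] i by auto
    moreover have "part mu (Suc i) = part l (Suc i)" using pmu[of "Suc i"] by auto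
    moreover note part_Suc_le[OF mu(1) i(1)]
    moreover have "part mu i = part l i - 1" using pmu[OF i(1)] by simp
    ultimately show ?thesis by auto
  qed simp
  then show ?thesis using i jeq unfolding corner_rows_set_def by auto
qed

lemma remove_corner_box:
  assumes i: "i \<in> corner_rows_set l"
  obtains mu where "strict_partition mu"
    "\<And>r. 1 \<le> r \<Longrightarrow> part mu r = (if r = i then part l i - 1 else part l r)"
proof (cases "i = length l \<and> part l i = 1")
  case True
  define mu where "mu = take (length l - 1) l"
  have "strict_partition mu" using sp unfolding mu_def Defs.strict_partition_def
    by (auto dest: in_set_takeD)
  moreover have "part mu r = (if r = i then part l i - 1 else part l r)" if "1 \<le> r" for r
    using True that unfolding mu_def Defs.part_def by auto
  ultimately show ?thesis using that by blast
next
  case False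
  have i1: "1 \<le> i" "i \<le> length l" and ic: "i = length l \<or> part l (Suc i) + 1 < part l i"
    using i unfolding corner_rows_set_def by auto
  define mu where "mu = l[i - 1 := part l i - 1]"
  have pmu: "part mu r = (if r = i then part l i - 1 else part l r)" for r
    unfolding mu_def using part_update[OF i1] by simp
  have len: "length mu = length l" unfolding mu_def by simp
  have nth: "mu ! k = part mu (Suc k)" if "k < length mu" for k
    using that unfolding Defs.part_def by simp
  have "strict_partition mu"
  proof (rule strict_partitionI_nth)
    fix k assume k: "Suc k < length mu"
    have a: "part l (Suc (Suc k)) < part l (Suc k)"
      using part_strict_antimono[OF sp, of "Suc k" "Suc (Suc k)"] k len by auto
    have b: "part l (Suc (Suc k)) + 1 < part l (Suc k)" if "Suc k = i"
      using ic that k len by auto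
    show "mu ! Suc k < mu ! k"
      unfolding nth[OF k] nth[of k] using k pmu a b len part_gap[OF sp, of "Suc k" "Suc (Suc k)"]
        part_gap[OF sp, of "Suc k" i] i1
      by (auto simp: nth)
  next
    fix x assume "x \<in> set mu"
    then obtain k where k: "k < length mu" "x = mu ! k" by (auto simp: in_set_conv_nth)
    show "0 < x" using k nth[OF k(1)] pmu part_pos[OF sp, of "Suc k"] len False ic i1
      by (cases "Suc k = i") auto
  qed
  then show ?thesis using that pmu by blast
qed

lemma outer_cornerI:
  assumes i: "i \<in> corner_rows_set l"
  shows "(i, i + part l i) \<in> outer_corners l"
proof -
  have i1: "1 \<le> i" "i \<le> length l" using i unfolding corner_rows_set_def by auto
  have ppos: "0 < part l i" using part_pos[OF sp i1] .
  obtain mu where mu: "strict_partition mu"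
    and pm: "\<And>r. 1 \<le> r \<Longrightarrow> part mu r = (if r = i then part l i - 1 else part l r)"
    using remove_corner_box[OF i] by blast
  have "diagram mu = diagram l - {(i, i + part l i)}"
    using pm ppos by (auto simp: mem_diagram_iff_part split: if_splits)
  moreover have "(i, i + part l i) \<in> diagram l" using ppos i1 by (auto simp: mem_diagram_iff_part)
  ultimately show ?thesis unfolding Defs.outer_corners_def using mu by blast
qed

lemma outer_corners_eq: "outer_corners l = (\<lambda>i. (i, i + part l i)) ` corner_rows_set l"
  using outer_cornerD outer_cornerI by fastforce

lemma fst_outer_corners: "fst ` outer_corners l = corner_rows_set l"
  unfolding outer_corners_eq by force

lemma corner_rows_eq: "corner_rows l = rev (sorted_list_of_set (corner_rows_set l))"
  unfolding Defs.corner_rows_def fst_outer_corners ..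

lemma n_corners_eq: "n_corners l = card (corner_rows_set l)"
  unfolding Defs.n_corners_def outer_corners_eq by (rule card_image) (auto simp: inj_on_def)

lemma length_corner_rows: "length (corner_rows l) = n_corners l"
  unfolding corner_rows_eq n_corners_eq by (simp add: finite_corner_rows_set)

lemma set_corner_rows: "set (corner_rows l) = corner_rows_set l"
  unfolding corner_rows_eq by (simp add: finite_corner_rows_set)

lemma distinct_corner_rows: "distinct (corner_rows l)"
  unfolding corner_rows_eq by (simp add: finite_corner_rows_set)

lemma corner_rows_decreasing:
  assumes "p < p2" "p2 < length (corner_rows l)"
  shows "corner_rows l ! p2 < corner_rows l ! p"
proof -
  have "sorted_wrt (<) (sorted_list_of_set (corner_rows_set l))"
    by (simp add: finite_corner_rows_set strict_sorted_list_of_set)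
  then have "sorted_wrt (>) (corner_rows l)" unfolding corner_rows_eq by (simp add: sorted_wrt_rev)
  then show ?thesis using sorted_wrt_nth_less assms by fastforce
qed

lemma corner_rows_nth_mem: "p < length (corner_rows l) \<Longrightarrow> corner_rows l ! p \<in> corner_rows_set l"
  using set_corner_rows nth_mem by blast

lemma corner_rows_set_nth: "c \<in> corner_rows_set l \<Longrightarrow> \<exists>p < length (corner_rows l). corner_rows l ! p = c"
  using set_corner_rows by (auto simp: in_set_conv_nth)

lemma corner_rows_antimono: "p \<le> p' \<Longrightarrow> p' < length (corner_rows l) \<Longrightarrow> corner_rows l ! p' \<le> corner_rows l ! p"
  using corner_rows_decreasing[of p p'] by (cases "p = p'") auto

lemma beta_val:
  assumes "1 \<le> s" "s \<le> n_corners l"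
  shows "beta l s = int (corner_rows l ! (s - 1)) + int (part l (corner_rows l ! (s - 1)))"
proof -
  define c where "c = corner_rows l ! (s - 1)"
  have c: "c \<in> corner_rows_set l" unfolding c_def using corner_rows_nth_mem assms length_corner_rows by auto
  have "(THE j. (c, j) \<in> outer_corners l) = c + part l c"
    by (rule the_equality) (use c in \<open>auto simp: outer_corners_eq\<close>)
  then show ?thesis unfolding Defs.beta_def c_def using assms by simp
qed

lemma alpha_val: "1 \<le> s \<Longrightarrow> s \<le> n_corners l \<Longrightarrow> alpha l s = int (corner_rows l ! (s - 1))"
  unfolding Defs.alpha_def by simp

lemma corner_rows_set_range: "c \<in> corner_rows_set l \<Longrightarrow> 1 \<le> c \<and> c \<le> length l"
  unfolding corner_rows_set_def by auto

lemma row_end_noncorner: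
  assumes "1 \<le> r" "r < length l" "r \<notin> corner_rows_set l"
  shows "row_end l (Suc r) = row_end l r"
proof -
  have "part l (Suc r) + 1 \<le> part l r" using part_gap[OF sp, of r "Suc r"] assms by auto
  moreover have "\<not> part l (Suc r) + 1 < part l r" using assms unfolding corner_rows_set_def by auto
  ultimately show ?thesis unfolding row_end_def by simp
qed

lemma row_end_const:
  assumes "1 \<le> a" "a + d \<le> length l" "\<And>r. a \<le> r \<Longrightarrow> r < a + d \<Longrightarrow> r \<notin> corner_rows_set l"
  shows "row_end l (a + d) = row_end l a"
  using assms(2,3)
proof (induction d)
  case (Suc d)
  then have "row_end l (Suc (a + d)) = row_end l (a + d)"
    using row_end_noncorner[of "a + d"] assms(1) by auto
  with Suc show ?case by simp
qed simp

lemma length_in_corner_rows_set: "1 \<le> length l \<Longrightarrow> length l \<in> corner_rows_set l"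
  unfolding corner_rows_set_def by auto

lemma corner_rows_first: "1 \<le> length l \<Longrightarrow> corner_rows l ! 0 = length l \<and> 1 \<le> n_corners l"
proof -
  assume a: "1 \<le> length l"
  obtain p where p: "p < length (corner_rows l)" "corner_rows l ! p = length l"
    using corner_rows_set_nth[OF length_in_corner_rows_set[OF a]] by auto
  have "0 < length (corner_rows l)" using p by auto
  then have "corner_rows l ! 0 \<le> length l" using corner_rows_set_range[OF corner_rows_nth_mem, of 0] by auto
  moreover have "corner_rows l ! p \<le> corner_rows l ! 0" using corner_rows_antimono[of 0 p] p by auto
  ultimately show ?thesis using p length_corner_rows by auto
qed

lemma corner_rows_last_le: "c \<in> corner_rows_set l \<Longrightarrow> corner_rows l ! (n_corners l - 1) \<le> c"
proof -
  assume c: "c \<in> corner_rows_set l"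
  obtain p where p: "p < length (corner_rows l)" "corner_rows l ! p = c" using corner_rows_set_nth[OF c] by auto
  show ?thesis using corner_rows_antimono[of p "n_corners l - 1"] p length_corner_rows by auto
qed

lemma sum_ycoord:
  "(\<Sum>s\<in>{1..n_corners l}. f (ycoord l s)) = (\<Sum>c\<in>corner_rows_set l. f (int (part l c)))"
proof -
  define R where "R = corner_rows l"
  have "(\<Sum>s\<in>{1..n_corners l}. f (ycoord l s)) = (\<Sum>s\<in>{1..n_corners l}. f (int (part l (R ! (s - 1)))))"
    by (rule sum.cong) (auto simp: Defs.ycoord_def beta_val alpha_val R_def)
  also have "\<dots> = (\<Sum>p<length R. f (int (part l (R ! p))))"
    unfolding R_def length_corner_rows by (rule sum_atLeast1_shift)
  also have "\<dots> = (\<Sum>c\<in>corner_rows_set l. f (int (part l c)))"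
    using sum_nth_distinct[OF distinct_corner_rows] set_corner_rows unfolding R_def by simp
  finally show ?thesis .
qed

lemma xcoord_eq:
  assumes p: "p < n_corners l"
  shows "xcoord l p = row_end l (corner_rows l ! p + 1) - int (corner_rows l ! p)"
proof -
  define R where "R = corner_rows l"
  have lenR: "length R = n_corners l" unfolding R_def by (rule length_corner_rows)
  have a: "alpha l (p + 1) = int (R ! p)" using alpha_val[of "p + 1"] p unfolding R_def by simp
  show ?thesis
  proof (cases "p = 0")
    case True
    have "1 \<le> length l" using p corner_rows_set_range corner_rows_nth_mem lenR unfolding R_def by fastforce
    then have "R ! 0 = length l" using corner_rows_first unfolding R_def by simp
    then show ?thesis
      using a part_zero[of l "Suc (length l)"] True unfolding R_def Defs.xcoord_def Defs.beta_def row_end_def by simp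
  next
    case False
    have b: "beta l p = row_end l (R ! (p - 1))"
      using beta_val[of p] p False unfolding R_def row_end_def by simp
    have lt: "R ! p < R ! (p - 1)" using corner_rows_decreasing[of "p - 1" p] p False lenR unfolding R_def by auto
    have range: "1 \<le> R ! p" "R ! (p - 1) \<le> length l"
      using corner_rows_set_range[OF corner_rows_nth_mem] p lenR unfolding R_def by (auto simp del: One_nat_def)
    have "row_end l (R ! p + 1 + (R ! (p - 1) - (R ! p + 1))) = row_end l (R ! p + 1)"
    proof (rule row_end_const)
      fix r assume r: "R ! p + 1 \<le> r" "r < R ! p + 1 + (R ! (p - 1) - (R ! p + 1))"
      show "r \<notin> corner_rows_set l"
      proof
        assume "r \<in> corner_rows_set l"
        then obtain t where t: "t < length R" "R ! t = r" using corner_rows_set_nth unfolding R_def by blast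
        show False
        proof (cases "t < p")
          case True
          then have "R ! (p - 1) \<le> R ! t" using corner_rows_antimono[of t "p - 1"] lenR p unfolding R_def by auto
          then show False using r t lt by auto
        next
          case False
          then have "R ! t \<le> R ! p" using corner_rows_antimono[of p t] t unfolding R_def by auto
          then show False using r t by auto
        qed
      qed
    qed (use range lt in auto)
    then show ?thesis using lt unfolding Defs.xcoord_def a b R_def by simp
  qed
qed

lemma xcoord_last: "xcoord l (n_corners l) = row_end l 1"
proof (cases "n_corners l = 0")
  case True
  then have "corner_rows_set l = {}" using n_corners_eq finite_corner_rows_set by simp
  then have "l = []" using length_in_corner_rows_set by (cases l) auto
  then show ?thesis using True by (simp add: Defs.xcoord_def Defs.beta_def Defs.alpha_def row_end_def Defs.part_def)
next
  case False
  define c where "c = corner_rows l ! (n_corners l - 1)"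
  have c: "1 \<le> c" "c \<le> length l"
    using corner_rows_set_range[OF corner_rows_nth_mem, of "n_corners l - 1"] False length_corner_rows
    unfolding c_def by auto
  have "row_end l (1 + (c - 1)) = row_end l 1"
  proof (rule row_end_const)
    fix r assume "1 \<le> r" "r < 1 + (c - 1)"
    then show "r \<notin> corner_rows_set l" using corner_rows_last_le[of r] unfolding c_def by auto
  qed (use c in auto)
  then show ?thesis
    using beta_val[of "n_corners l"] c False
    unfolding Defs.xcoord_def Defs.alpha_def c_def row_end_def by simp
qed

lemma sum_xcoord:
  "(\<Sum>s\<in>{0..n_corners l}. f (xcoord l s))
     = (\<Sum>c\<in>corner_rows_set l. f (row_end l (c + 1) - int c)) + f (row_end l 1)"
proof -
  define R where "R = corner_rows l"
  have "{0..n_corners l} = {..<Suc (n_corners l)}" by auto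
  then have "(\<Sum>s\<in>{0..n_corners l}. f (xcoord l s))
      = (\<Sum>p<length R. f (row_end l (R ! p + 1) - int (R ! p))) + f (xcoord l (n_corners l))"
    using xcoord_eq unfolding R_def length_corner_rows by simp
  also have "(\<Sum>p<length R. f (row_end l (R ! p + 1) - int (R ! p)))
      = (\<Sum>c\<in>corner_rows_set l. f (row_end l (c + 1) - int c))"
    using sum_nth_distinct[OF distinct_corner_rows] set_corner_rows unfolding R_def by simp
  finally show ?thesis unfolding xcoord_last .
qed

text \<open>The sums over corners in \<open>q\<^sub>k\<close> telescope along the rows: a row without a corner
  ends in the same column as the next one.\<close>

lemma q_eq_q_set:
  assumes k: "1 \<le> k"
  shows "q k l = q_set k (set l)"
proof -
  define f :: "int \<Rightarrow> rat" where "f t = (of_int t gchoose 2) ^ k" for t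
  define u where "u r = f (row_end l (r + 1) - int r)" for r
  have f1: "f 1 = 0" unfolding f_def using k by (simp add: gchoose_2)
  have f_diff: "f (int a + 1) - f (int a) = tri a ^ k - tri (a - 1) ^ k" if "1 \<le> a" for a
  proof -
    have "(of_int (int a + 1) gchoose 2 :: rat) = tri a" unfolding tri_def gchoose_2 by (simp add: algebra_simps)
    moreover have "(of_int (int a) gchoose 2 :: rat) = tri (a - 1)" unfolding tri_def gchoose_2 using that
      by (simp add: of_nat_diff algebra_simps)
    ultimately show ?thesis unfolding f_def by simp
  qed
  have corners: "(\<Sum>c\<in>corner_rows_set l. u c - f (int (part l c))) = (\<Sum>r\<in>{1..length l}. u r - f (int (part l r)))"
  proof (rule sum.mono_neutral_left)
    show "\<forall>r\<in>{1..length l} - corner_rows_set l. u r - f (int (part l r)) = 0"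
      using row_end_noncorner length_in_corner_rows_set by (force simp: u_def row_end_def)
  qed (use corner_rows_set_range in auto)
  have "(\<Sum>r\<in>{1..length l}. u r) + u 0 = (\<Sum>r\<in>{1..length l}. f (int (part l r) + 1)) + u (length l)"
    using sum_telescope_shift[of u "length l"] unfolding u_def row_end_def
    by (simp add: of_nat_diff)
  moreover have "u (length l) = 0" unfolding u_def row_end_def using part_zero[of l "length l + 1"] f1 by simp
  ultimately have telescope: "(\<Sum>r\<in>{1..length l}. u r) + u 0 = (\<Sum>r\<in>{1..length l}. f (int (part l r) + 1))"
    by simp
  have "q k l = (\<Sum>c\<in>corner_rows_set l. u c - f (int (part l c))) + u 0"
    unfolding Defs.q_def f_def[symmetric] sum_xcoord sum_ycoord u_def by (simp add: sum_subtractf)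
  also have "\<dots> = (\<Sum>r\<in>{1..length l}. f (int (part l r) + 1) - f (int (part l r)))"
    unfolding corners using telescope by (simp add: sum_subtractf)
  also have "\<dots> = (\<Sum>r\<in>{1..length l}. tri (part l r) ^ k - tri (part l r - 1) ^ k)"
    using f_diff part_pos[OF sp] by (intro sum.cong) (auto simp: Suc_le_eq)
  also have "\<dots> = q_set k (set l)"
    unfolding q_set_def set_eq_part_image[OF sp] by (rule sum.reindex[OF part_inj[OF sp], unfolded comp_def, symmetric])
  finally show ?thesis .
qed

end

section \<open>The operator \<open>D\<close> on sets of parts\<close>

definition add_to_row :: "nat list \<Rightarrow> nat \<Rightarrow> nat list" where
  "add_to_row l i = (if i \<le> length l then l[i - 1 := part l i + 1] else l @ [1])"

definition addable_row :: "nat list \<Rightarrow> nat \<Rightarrow> bool" where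
  "addable_row l i \<longleftrightarrow> (i = 1 \<or> part l i + 1 < part l (i - 1))"

lemma part_add_to_row:
  assumes "1 \<le> i" "i \<le> length l + 1"
  shows "part (add_to_row l i) r = (if r = i then part l i + 1 else part l r)"
proof (cases "i \<le> length l")
  case True
  then show ?thesis unfolding add_to_row_def using part_update[OF assms(1) True] by simp
next
  case False
  then have i: "i = length l + 1" using assms by simp
  show ?thesis unfolding add_to_row_def using False i
    by (auto simp: Defs.part_def nth_append)
qed

lemma length_add_to_row: "length (add_to_row l i) = (if i \<le> length l then length l else length l + 1)"
  unfolding add_to_row_def by simp

lemma strict_partitionI_part:
  assumes "\<And>r. 1 \<le> r \<Longrightarrow> r < length L \<Longrightarrow> part L (Suc r) < part L r"
    "\<And>r. 1 \<le> r \<Longrightarrow> r \<le> length L \<Longrightarrow> 0 < part L r"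
  shows "strict_partition L"
proof (rule strict_partitionI_nth)
  fix k assume "Suc k < length L"
  then show "L ! Suc k < L ! k" using assms(1)[of "Suc k"] unfolding Defs.part_def by auto
next
  fix x assume "x \<in> set L"
  then obtain k where "k < length L" "x = L ! k" by (auto simp: in_set_conv_nth)
  then show "0 < x" using assms(2)[of "Suc k"] unfolding Defs.part_def by auto
qed

lemma strict_partition_eqI_part:
  assumes a: "strict_partition a" and b: "strict_partition b" and eq: "\<And>r. 1 \<le> r \<Longrightarrow> part a r = part b r"
  shows "a = b"
proof -
  have "length a = length b"
  proof (rule ccontr)
    assume "length a \<noteq> length b"
    then consider "length a < length b" | "length b < length a" by linarith
    then show False
    proof cases
      case 1
      then show False using part_pos[OF b, of "length b"] part_zero[of a "length b"] eq[of "length b"] by auto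
    next
      case 2
      then show False using part_pos[OF a, of "length a"] part_zero[of b "length a"] eq[of "length a"] by auto
    qed
  qed
  moreover have "a ! k = b ! k" if "k < length a" for k
    using eq[of "Suc k"] that \<open>length a = length b\<close> unfolding Defs.part_def by auto
  ultimately show ?thesis by (rule nth_equalityI)
qed

lemma part_pos_imp_le_length: "0 < part l a \<Longrightarrow> a \<le> length l"
  using part_zero[of l a] by (cases "a \<le> length l") auto

lemma card_diagram:
  assumes "length l \<le> N"
  shows "card (diagram l) = (\<Sum>r\<in>{1..N}. part l r)"
proof -
  have "diagram l = Sigma {1..N} (\<lambda>r. {r<..r + part l r})"
  proof (intro set_eqI iffI)
    fix x assume "x \<in> diagram l" then show "x \<in> Sigma {1..N} (\<lambda>r. {r<..r + part l r})"
      using assms by (cases x) (auto simp: mem_diagram)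
  next
    fix x assume x: "x \<in> Sigma {1..N} (\<lambda>r. {r<..r + part l r})"
    then have "0 < part l (fst x)" by (cases x) auto
    then show "x \<in> diagram l" using x part_pos_imp_le_length[of l "fst x"] by (cases x) (auto simp: mem_diagram)
  qed
  then have "card (diagram l) = (\<Sum>r\<in>{1..N}. card {r<..r + part l r})" by (simp add: card_SigmaI)
  then show ?thesis by simp
qed

lemma finite_diagram: "finite (diagram l)"
  by (rule finite_subset[of _ "Sigma {1..length l} (\<lambda>r. {r<..r + part l r})"]) (auto simp: mem_diagram)

lemma add_box_part_eq:
  assumes mu: "mu \<in> add_box l"
  obtains r0 where "1 \<le> r0" "\<And>r. 1 \<le> r \<Longrightarrow> part mu r = (if r = r0 then part l r0 + 1 else part l r)"
proof -
  have sub: "diagram l \<subseteq> diagram mu" and c1: "card (diagram mu - diagram l) = 1"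
    using mu unfolding Defs.add_box_def by auto
  have le: "part l r \<le> part mu r" if "1 \<le> r" for r
  proof (cases "part l r = 0")
    case False
    then have "(r, r + part l r) \<in> diagram l" using that by (auto simp: mem_diagram_iff_part)
    then have "(r, r + part l r) \<in> diagram mu" using sub by auto
    then show ?thesis by (auto simp: mem_diagram_iff_part)
  qed simp
  define N where "N = length l + length mu + 1"
  have "card (diagram mu) - card (diagram l) = 1"
    using c1 card_Diff_subset[OF finite_subset[OF sub finite_diagram] sub] by simp
  then have "(\<Sum>r\<in>{1..N}. part mu r) - (\<Sum>r\<in>{1..N}. part l r) = 1"
    using card_diagram[of l N] card_diagram[of mu N] unfolding N_def by simp
  moreover have "(\<Sum>r\<in>{1..N}. part mu r) = (\<Sum>r\<in>{1..N}. part mu r - part l r) + (\<Sum>r\<in>{1..N}. part l r)"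
    using le by (simp add: sum.distrib[symmetric])
  ultimately have "(\<Sum>r\<in>{1..N}. part mu r - part l r) = 1" by simp
  then obtain r0 where r0: "r0 \<in> {1..N}" "part mu r0 - part l r0 = 1"
    and rest: "\<And>r. r \<in> {1..N} \<Longrightarrow> r0 \<noteq> r \<Longrightarrow> part mu r - part l r = 0"
    using sum_eq_1_iff[of "{1..N}" "\<lambda>r. part mu r - part l r"] by auto
  have "part mu r = (if r = r0 then part l r0 + 1 else part l r)" if "1 \<le> r" for r
  proof (cases "r \<le> N")
    case True
    then show ?thesis using r0 rest[of r] le[OF that] that by auto
  next
    case False
    then show ?thesis using part_zero[of l r] part_zero[of mu r] r0 unfolding N_def by auto
  qed
  with r0 that show ?thesis by auto
qed

context
  fixes l :: "nat list"
  assumes sp: "strict_partition l"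
begin


lemma strict_partition_add_to_row:
  assumes i: "1 \<le> i" "i \<le> length l + 1" and ok: "addable_row l i"
  shows "strict_partition (add_to_row l i)"
proof (rule strict_partitionI_part)
  fix r assume r: "1 \<le> r" "r < length (add_to_row l i)"
  show "part (add_to_row l i) (Suc r) < part (add_to_row l i) r"
  proof (cases "Suc r = i")
    case True
    then show ?thesis using ok r unfolding part_add_to_row[OF i] addable_row_def by auto
  next
    case False
    show ?thesis
    proof (cases "r = i")
      case True
      then show ?thesis unfolding part_add_to_row[OF i] using part_Suc_le[OF sp, of i] i by auto
    next
      case False
      have "r < length l" using r \<open>Suc r \<noteq> i\<close> i unfolding length_add_to_row by (auto split: if_splits)
      then show ?thesis unfolding part_add_to_row[OF i]
        using False \<open>Suc r \<noteq> i\<close> part_strict_antimono[OF sp, of r "Suc r"] r by auto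
    qed
  qed
next
  fix r assume r: "1 \<le> r" "r \<le> length (add_to_row l i)"
  show "0 < part (add_to_row l i) r"
  proof (cases "r = i")
    case False
    then have "r \<le> length l" using r i unfolding length_add_to_row by (auto split: if_splits)
    then show ?thesis unfolding part_add_to_row[OF i] using False part_pos[OF sp] r by auto
  qed (simp add: part_add_to_row[OF i])
qed

lemma add_to_row_in_add_box:
  assumes i: "1 \<le> i" "i \<le> length l + 1" and ok: "addable_row l i"
  shows "add_to_row l i \<in> add_box l"
proof -
  have sub: "diagram l \<subseteq> diagram (add_to_row l i)" by (auto simp: mem_diagram_iff_part part_add_to_row[OF i])
  have "diagram (add_to_row l i) - diagram l = {(i, i + part l i + 1)}"
    using i by (auto simp: mem_diagram_iff_part part_add_to_row[OF i] split: if_splits)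
  then show ?thesis unfolding Defs.add_box_def using strict_partition_add_to_row[OF i ok] sub by simp
qed

lemma add_box_imp_add_to_row:
  assumes mu: "mu \<in> add_box l"
  shows "\<exists>i. 1 \<le> i \<and> i \<le> length l + 1 \<and> addable_row l i \<and> mu = add_to_row l i"
proof -
  have smu: "strict_partition mu" using mu unfolding Defs.add_box_def by auto
  obtain r0 where r0pos: "1 \<le> r0"
    and pm: "\<And>r. 1 \<le> r \<Longrightarrow> part mu r = (if r = r0 then part l r0 + 1 else part l r)"
    using add_box_part_eq[OF mu] by blast
  have "r0 \<le> length mu" using pm[OF r0pos] part_zero[of mu r0] by (cases "r0 \<le> length mu") auto
  have r0le: "r0 \<le> length l + 1"
  proof (rule ccontr)
    assume "\<not> r0 \<le> length l + 1"
    then have "0 < part mu (length l + 1)" using part_pos[OF smu, of "length l + 1"] \<open>r0 \<le> length mu\<close>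
      by auto
    moreover have "part mu (length l + 1) = 0"
      using pm[of "length l + 1"] \<open>\<not> r0 \<le> length l + 1\<close> part_zero[of l "length l + 1"] by auto
    ultimately show False by simp
  qed
  have ok: "addable_row l r0"
  proof (cases "r0 = 1")
    case False
    then have r2: "1 \<le> r0 - 1" "Suc (r0 - 1) = r0" "r0 - 1 \<noteq> r0" using r0pos by auto
    then have "part mu r0 < part mu (r0 - 1)" using part_Suc_le[OF smu r2(1)] pm[OF r0pos] by auto
    moreover have "part mu (r0 - 1) = part l (r0 - 1)" using pm[OF r2(1)] r2(3) by presburger
    ultimately show ?thesis using pm[OF r0pos] unfolding addable_row_def by simp
  qed (simp add: addable_row_def)
  have "mu = add_to_row l r0"
    by (rule strict_partition_eqI_part[OF smu strict_partition_add_to_row[OF r0pos r0le ok]])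
      (simp add: pm part_add_to_row[OF r0pos r0le])
  then show ?thesis using r0pos r0le ok by blast
qed

lemma inj_on_add_to_row: "inj_on (add_to_row l) {1..length l + 1}"
proof (rule inj_onI)
  fix i j assume ij: "i \<in> {1..length l + 1}" "j \<in> {1..length l + 1}" "add_to_row l i = add_to_row l j"
  show "i = j"
  proof (rule ccontr)
    assume "i \<noteq> j"
    have "part (add_to_row l i) i = part l i + 1" using part_add_to_row[of i l i] ij by auto
    moreover have "part (add_to_row l j) i = part l i" using part_add_to_row[of j l i] ij \<open>i \<noteq> j\<close> by auto
    ultimately show False using ij by simp
  qed
qed

lemma add_box_eq_image: "add_box l = add_to_row l ` {i \<in> {1..length l + 1}. addable_row l i}"
  using add_box_imp_add_to_row add_to_row_in_add_box by fastforce


lemma part_pred_ge: "1 \<le> i \<Longrightarrow> i \<le> length l + 1 \<Longrightarrow> 2 \<le> i \<Longrightarrow> part l i + 1 \<le> part l (i - 1)"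
proof -
  assume i: "1 \<le> i" "i \<le> length l + 1" "2 \<le> i"
  show ?thesis
  proof (cases "i \<le> length l")
    case True
    then show ?thesis using part_gap[OF sp, of "i - 1" i] i by auto
  next
    case False
    then have "i = length l + 1" using i by simp
    then show ?thesis using part_pos[OF sp, of "length l"] part_zero[of l i] i by auto
  qed
qed

lemma addable_row_iff:
  assumes i: "1 \<le> i" "i \<le> length l + 1"
  shows "addable_row l i \<longleftrightarrow> part l i + 1 \<notin> set l"
proof
  assume ok: "addable_row l i"
  show "part l i + 1 \<notin> set l"
  proof
    assume "part l i + 1 \<in> set l"
    then obtain j where j: "j \<in> {1..length l}" "part l j = part l i + 1" using set_eq_part_image[OF sp] by auto
    show False
    proof (cases "i \<le> j")
      case True
      then have "part l j \<le> part l i" using part_gap[OF sp, of i j] j i by auto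
      then show False using j by simp
    next
      case False
      then have "2 \<le> i" "j \<le> i - 1" using j by auto
      have "part l (i - 1) + (i - 1 - j) \<le> part l j"
        by (rule part_gap[OF sp]) (use j i \<open>j \<le> i - 1\<close> in auto)
      then have "part l (i - 1) \<le> part l j" by simp
      then show False using ok j \<open>2 \<le> i\<close> unfolding addable_row_def by auto
    qed
  qed
next
  assume "part l i + 1 \<notin> set l"
  show "addable_row l i"
  proof (rule ccontr)
    assume nok: "\<not> addable_row l i"
    then have i2: "2 \<le> i" using i unfolding addable_row_def by auto
    then have "part l (i - 1) = part l i + 1" using part_pred_ge[OF i i2] nok unfolding addable_row_def by auto
    moreover have "part l (i - 1) \<in> set l" unfolding set_eq_part_image[OF sp] by (rule imageI) (use i i2 in auto)
    ultimately show False using \<open>part l i + 1 \<notin> set l\<close> by simp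
  qed
qed

lemma set_add_to_row:
  assumes i: "1 \<le> i" "i \<le> length l + 1"
  shows "set (add_to_row l i) = insert (part l i + 1) (set l - {part l i})"
proof (cases "i \<le> length l")
  case True
  have d: "distinct l"
  proof -
    have "sorted_wrt (<) (rev l)" using sp unfolding Defs.strict_partition_def by (simp add: sorted_wrt_rev)
    then show ?thesis by (simp add: strict_sorted_iff)
  qed
  have "part l i = l ! (i - 1)" using i True unfolding Defs.part_def by auto
  then show ?thesis unfolding add_to_row_def using True i set_update_distinct[OF d, of "i - 1"] by auto
next
  case False
  then have "part l i = 0" by (simp add: part_zero)
  moreover have "0 \<notin> set l" using sp unfolding Defs.strict_partition_def by auto
  ultimately show ?thesis unfolding add_to_row_def using False by auto
qed

lemma inj_on_part_ext: "inj_on (part l) {1..length l + 1}"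
proof -
  have "part l (length l + 1) \<notin> part l ` ({1..length l} - {length l + 1})"
    using part_pos[OF sp] part_zero[of l "length l + 1"] by force
  then have inj: "inj_on (part l) (insert (length l + 1) {1..length l})"
    using part_inj[OF sp] by (simp only: inj_on_insert) simp
  have eq: "{1..length l + 1} = insert (length l + 1) {1..length l}" by auto
  show ?thesis unfolding eq by (rule inj)
qed

lemma part_image_ext: "part l ` {1..length l + 1} = insert 0 (set l)"
proof -
  have "{1..length l + 1} = insert (length l + 1) {1..length l}" by auto
  then show ?thesis using set_eq_part_image[OF sp] part_zero[of l "length l + 1"] by simp
qed

text \<open>Adding a box to a row with part \<open>a\<close> (with \<open>a = 0\<close> for a new row) replaces \<open>a\<close> by \<open>a + 1\<close>.\<close>

lemma Dop_eq_sum_set: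
  assumes GF: "\<And>mu. strict_partition mu \<Longrightarrow> G mu = F (set mu)"
  shows "Dop G l = (\<Sum>a\<in>{a \<in> insert 0 (set l). a + 1 \<notin> set l}.
            (if a = 0 then 1 else 2) * F (insert (a + 1) (set l - {a}))) - F (set l)"
proof -
  define OK where "OK = {i \<in> {1..length l + 1}. addable_row l i}"
  define \<phi> where "\<phi> a = (if a = 0 then 1 else 2) * F (insert (a + 1) (set l - {a}))" for a
  have fin: "finite OK" unfolding OK_def by simp
  have inj: "inj_on (add_to_row l) A" if "A \<subseteq> OK" for A
    by (rule inj_on_subset[OF inj_on_add_to_row]) (use that in \<open>auto simp: OK_def\<close>)
  have new_row: "{mu \<in> add_box l. length mu > length l} = add_to_row l ` {i \<in> OK. \<not> i \<le> length l}"
    unfolding add_box_eq_image OK_def by (auto simp: length_add_to_row)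
  have old_row: "{mu \<in> add_box l. length mu = length l} = add_to_row l ` {i \<in> OK. i \<le> length l}"
    unfolding add_box_eq_image OK_def by (auto simp: length_add_to_row split: if_splits)
  have weight: "\<phi> (part l i) = (if i \<le> length l then 2 else 1) * G (add_to_row l i)" if i: "i \<in> OK" for i
  proof -
    have "i \<le> length l \<longleftrightarrow> part l i \<noteq> 0"
      using part_pos[OF sp, of i] part_zero[of l i] i unfolding OK_def by (cases "i \<le> length l") auto
    then show ?thesis
      using GF strict_partition_add_to_row set_add_to_row[of i] i unfolding OK_def \<phi>_def by auto
  qed
  have "Dop G l = (\<Sum>i\<in>{i \<in> OK. \<not> i \<le> length l}. \<phi> (part l i)) + (\<Sum>i\<in>{i \<in> OK. i \<le> length l}. \<phi> (part l i)) - G l"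
    unfolding Defs.Dop_def new_row old_row
    by (simp add: sum.reindex inj weight sum_distrib_left)
  also have "\<dots> = (\<Sum>i\<in>OK. \<phi> (part l i)) - G l"
    by (subst sum.union_disjoint[symmetric]) (auto simp: fin intro: sum.cong)
  also have "(\<Sum>i\<in>OK. \<phi> (part l i)) = (\<Sum>a\<in>part l ` OK. \<phi> a)"
    by (rule sum.reindex[symmetric, unfolded comp_def], rule inj_on_subset[OF inj_on_part_ext]) (auto simp: OK_def)
  also have "part l ` OK = {a \<in> insert 0 (set l). a + 1 \<notin> set l}"
    unfolding part_image_ext[symmetric] OK_def using addable_row_iff by auto
  finally show ?thesis using GF[OF sp] unfolding \<phi>_def by simp
qed

end

section \<open>Residues\<close>

definition hook_ratio :: "nat \<Rightarrow> nat \<Rightarrow> rat" where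
  "hook_ratio c b = (of_nat c + of_nat b) / \<bar>of_nat c - of_nat b\<bar>"

lemma H_set_pos: "finite S \<Longrightarrow> 0 < H_set S"
  unfolding H_set_def by (intro prod_pos mult_pos_pos) (auto intro!: divide_pos_pos)

lemma H_set_insert:
  assumes "finite R" "c \<notin> R"
  shows "H_set (insert c R) = H_set R * fact c * (\<Prod>b\<in>R. hook_ratio c b)"
proof -
  define \<rho> :: "nat \<Rightarrow> nat \<Rightarrow> rat"
    where "\<rho> a b = (of_nat a + of_nat b) / (of_nat a - of_nat b)" for a b
  have below_c: "{b \<in> insert c R. b < c} = {b \<in> R. b < c}" by auto
  have below_a: "(\<Prod>b\<in>{b \<in> insert c R. b < a}. \<rho> a b) = (if c < a then \<rho> a c else 1) * (\<Prod>b\<in>{b \<in> R. b < a}. \<rho> a b)"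
    if "a \<in> R" for a
  proof (cases "c < a")
    case True
    then have "{b \<in> insert c R. b < a} = insert c {b \<in> R. b < a}" by auto
    then show ?thesis using True assms by simp
  next
    case False
    then have "{b \<in> insert c R. b < a} = {b \<in> R. b < a}" by auto
    then show ?thesis using False by simp
  qed
  have "H_set (insert c R) = (fact c * (\<Prod>b\<in>{b \<in> R. b < c}. \<rho> c b)) * (\<Prod>a\<in>R. fact a * (\<Prod>b\<in>{b \<in> insert c R. b < a}. \<rho> a b))"
    unfolding H_set_def \<rho>_def[symmetric] using assms below_c by simp
  also have "(\<Prod>a\<in>R. fact a * (\<Prod>b\<in>{b \<in> insert c R. b < a}. \<rho> a b))
      = (\<Prod>a\<in>R. (if c < a then \<rho> a c else 1) * (fact a * (\<Prod>b\<in>{b \<in> R. b < a}. \<rho> a b)))"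
    using below_a by (intro prod.cong) (auto simp: algebra_simps)
  also have "\<dots> = (\<Prod>a\<in>R. (if c < a then \<rho> a c else 1)) * H_set R"
    unfolding H_set_def \<rho>_def[symmetric] by (simp add: prod.distrib)
  also have "(\<Prod>a\<in>R. (if c < a then \<rho> a c else 1)) = (\<Prod>a\<in>{a \<in> R. c < a}. \<rho> a c)"
    using assms(1) by (simp add: prod.If_cases Int_def)
  finally have H_insert_eq: "H_set (insert c R) = H_set R * fact c * ((\<Prod>b\<in>{b \<in> R. b < c}. \<rho> c b) * (\<Prod>a\<in>{a \<in> R. c < a}. \<rho> a c))"
    by (simp add: algebra_simps)
  have "(\<Prod>b\<in>R. hook_ratio c b) = (\<Prod>b\<in>R. if b < c then \<rho> c b else \<rho> b c)"
    unfolding hook_ratio_def \<rho>_def by (intro prod.cong) (auto simp: add.commute abs_if)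
  also have "\<dots> = (\<Prod>b\<in>R \<inter> {b. b < c}. \<rho> c b) * (\<Prod>b\<in>R \<inter> - {b. b < c}. \<rho> b c)"
    by (rule prod.If_cases) (rule assms(1))
  also have "R \<inter> {b. b < c} = {b \<in> R. b < c}" by auto
  also have "R \<inter> - {b. b < c} = {a \<in> R. c < a}" using assms(2) by (auto simp: not_less order.order_iff_strict)
  finally show ?thesis using H_insert_eq by simp
qed

text \<open>\<open>residue S a\<close> is the coefficient of \<open>1 / (z - T(a))\<close> in the partial fraction expansion of
  \<open>\<Prod>\<^sub>b\<^sub>\<in>\<^sub>S (z - T(b - 1)) / \<Prod>\<^sub>a\<^sub>'\<^sub>\<in>\<^sub>S\<^sub>\<union>\<^sub>{\<^sub>0\<^sub>} (z - T(a'))\<close>.\<close>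

definition residue :: "nat set \<Rightarrow> nat \<Rightarrow> rat" where
  "residue S a = (\<Prod>b\<in>S. tri a - tri (b - 1)) / (\<Prod>a'\<in>insert 0 S - {a}. tri a - tri a')"

lemma tri_quotient_eq_hook_ratio:
  assumes "1 \<le> b" "b \<noteq> a" "b \<noteq> a + 1"
  shows "(tri a - tri (b - 1)) / (tri a - tri b) = hook_ratio a b / hook_ratio (a + 1) b"
proof -
  define x y where "x = (of_nat a :: rat)" and "y = (of_nat b :: rat)"
  have sign: "\<bar>x + 1 - y\<bar> / \<bar>x - y\<bar> = (x + 1 - y) / (x - y)"
  proof (cases "b < a")
    case False
    then have "x - y < 0" "x + 1 - y < 0" using assms unfolding x_def y_def by auto
    then show ?thesis by (simp only: abs_of_neg minus_divide_divide)
  qed (use assms in \<open>auto simp: x_def y_def\<close>)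
  have num: "tri a - tri (b - 1) = (x - y + 1) * (x + y) / 2"
    unfolding x_def y_def by (rule tri_diff_pred[OF assms(1)])
  have den: "tri a - tri b = (x - y) * (x + y + 1) / 2"
    unfolding x_def y_def by (rule tri_diff)
  have "(tri a - tri (b - 1)) / (tri a - tri b) = ((x - y + 1) * (x + y)) / ((x - y) * (x + y + 1))"
    unfolding num den by simp
  also have "\<dots> = ((x + y) * (x + 1 - y)) / ((x + 1 + y) * (x - y))"
    by (rule arg_cong2[where f = "(/)"]) (simp_all add: algebra_simps)
  also have "\<dots> = (x + y) / (x + 1 + y) * ((x + 1 - y) / (x - y))" by simp
  also have "\<dots> = ((x + y) / \<bar>x - y\<bar>) / ((x + 1 + y) / \<bar>x + 1 - y\<bar>)"
    unfolding sign[symmetric] by simp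
  also have "\<dots> = hook_ratio a b / hook_ratio (a + 1) b"
    unfolding hook_ratio_def x_def y_def by (simp add: add_ac)
  finally show ?thesis .
qed
lemma residue_eq_0:
  assumes "finite S" "a + 1 \<in> S"
  shows "residue S a = 0"
proof -
  have "(\<Prod>b\<in>S. tri a - tri (b - 1)) = 0" using assms by (intro prod_zero bexI[of _ "a + 1"]) auto
  then show ?thesis unfolding residue_def by simp
qed

lemma residue_pos_eq:
  assumes S: "finite S" "0 \<notin> S" and a: "a \<in> S" "a + 1 \<notin> S"
  shows "residue S a = 2 * H_set S / H_set (insert (a + 1) (S - {a}))"
proof -
  define R where "R = S - {a}"
  have R: "finite R" "a \<notin> R" "a + 1 \<notin> R" "0 \<notin> R" using S a by (simp_all add: R_def)
  have SR: "S = insert a R" using a by (auto simp: R_def)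
  have a1: "1 \<le> a" using a S by (cases a) auto
  have Ta: "tri a - tri (a - 1) = of_nat a" unfolding tri_diff_pred[OF a1] by (simp add: field_simps)
  have Ta0: "tri a - tri 0 = of_nat a * (of_nat a + 1) / 2" unfolding tri_def by simp
  have den: "insert 0 S - {a} = insert 0 R" using SR S a1 R by auto
  have num: "(\<Prod>b\<in>S. tri a - tri (b - 1)) = of_nat a * (\<Prod>b\<in>R. tri a - tri (b - 1))"
    unfolding SR using R Ta by simp
  have dn: "(\<Prod>a'\<in>insert 0 S - {a}. tri a - tri a') = (of_nat a * (of_nat a + 1) / 2) * (\<Prod>b\<in>R. tri a - tri b)"
    unfolding den using R by (simp add: Ta0)
  have "residue S a = (of_nat a * (\<Prod>b\<in>R. tri a - tri (b - 1))) / (of_nat a * (of_nat a + 1) / 2 * (\<Prod>b\<in>R. tri a - tri b))"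
    unfolding residue_def num dn ..
  also have "\<dots> = 2 / (of_nat a + 1) * ((\<Prod>b\<in>R. tri a - tri (b - 1)) / (\<Prod>b\<in>R. tri a - tri b))"
    using a1 by (simp add: mult.assoc)
  also have "(\<Prod>b\<in>R. tri a - tri (b - 1)) / (\<Prod>b\<in>R. tri a - tri b) = (\<Prod>b\<in>R. (tri a - tri (b - 1)) / (tri a - tri b))"
    by (simp add: prod_dividef)
  also have "\<dots> = (\<Prod>b\<in>R. hook_ratio a b / hook_ratio (a + 1) b)"
  proof (rule prod.cong)
    fix b assume b: "b \<in> R"
    have "1 \<le> b" using b R by (cases b) auto
    then show "(tri a - tri (b - 1)) / (tri a - tri b) = hook_ratio a b / hook_ratio (a + 1) b"
      using tri_quotient_eq_hook_ratio[of b a] b R by auto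
  qed simp
  also have "\<dots> = (\<Prod>b\<in>R. hook_ratio a b) / (\<Prod>b\<in>R. hook_ratio (a + 1) b)" by (simp add: prod_dividef)
  finally have res: "residue S a = 2 / (of_nat a + 1) * ((\<Prod>b\<in>R. hook_ratio a b) / (\<Prod>b\<in>R. hook_ratio (a + 1) b))" .
  have h1: "H_set S = H_set R * fact a * (\<Prod>b\<in>R. hook_ratio a b)" unfolding SR using H_set_insert[OF R(1,2)] .
  have h2: "H_set (insert (a + 1) (S - {a})) = H_set R * fact (a + 1) * (\<Prod>b\<in>R. hook_ratio (a + 1) b)"
    unfolding R_def[symmetric] using H_set_insert[OF R(1,3)] .
  have "H_set R * fact a \<noteq> 0" using H_set_pos[OF R(1)] by simp
  then have "residue S a = (H_set R * fact a) * (2 * (\<Prod>b\<in>R. hook_ratio a b))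
      / ((H_set R * fact a) * ((of_nat a + 1) * (\<Prod>b\<in>R. hook_ratio (a + 1) b)))"
    unfolding res by (subst mult_divide_mult_cancel_left) simp_all
  then show ?thesis unfolding h1 h2 by (simp add: ac_simps)
qed

lemma residue_0_eq:
  assumes S: "finite S" "0 \<notin> S" "1 \<notin> S"
  shows "residue S 0 = H_set S / H_set (insert 1 S)"
proof -
  have b2: "2 \<le> b" if "b \<in> S" for b using S that by (cases b; cases "b - 1") auto
  have den: "insert 0 S - {0} = S" using S by auto
  have "residue S 0 = (\<Prod>b\<in>S. (tri 0 - tri (b - 1)) / (tri 0 - tri b))"
    unfolding residue_def den by (simp add: prod_dividef)
  also have "\<dots> = (\<Prod>b\<in>S. hook_ratio 0 b / hook_ratio 1 b)"
  proof (rule prod.cong)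
    fix b assume "b \<in> S"
    then show "(tri 0 - tri (b - 1)) / (tri 0 - tri b) = hook_ratio 0 b / hook_ratio 1 b"
      using tri_quotient_eq_hook_ratio[of b 0] b2[of b] by simp
  qed simp
  also have "\<dots> = (\<Prod>b\<in>S. 1 / hook_ratio 1 b)"
    by (intro prod.cong) (auto simp: hook_ratio_def dest: b2)
  also have "\<dots> = 1 / (\<Prod>b\<in>S. hook_ratio 1 b)" by (simp add: prod_dividef)
  also have "\<dots> = H_set S / H_set (insert 1 S)"
    using H_set_insert[OF S(1) S(3)] H_set_pos[OF S(1)] by simp
  finally show ?thesis .
qed

lemma residue_eq_H_set_ratio:
  assumes S: "finite S" "0 \<notin> S" and a: "a \<in> insert 0 S" "a + 1 \<notin> S"
  shows "residue S a = (if a = 0 then 1 else 2) * H_set S / H_set (insert (a + 1) (S - {a}))"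
proof (cases "a = 0")
  case True
  then show ?thesis using residue_0_eq[OF S] a S by auto
next
  case False
  then show ?thesis using residue_pos_eq[OF S _ a(2)] a by auto
qed


section \<open>Partial fractions and Newton's identities\<close>

unbundle fps_syntax

lemma reflect_poly_linear: "reflect_poly [:- c, 1:] = [:1, - (c::'a::field):]"
  by (simp add: reflect_poly_def)

lemma degree_prod_linear:
  "degree (\<Prod>i\<in>C. [:- c i, 1:]) = card (C :: 'b set)" for c :: "'b \<Rightarrow> 'a::field"
  by (simp add: degree_prod_sum_eq)

text \<open>Partial fractions \<open>\<Prod>\<^sub>j (z - y\<^sub>j) / \<Prod>\<^sub>i (z - x\<^sub>i) = \<Sum>\<^sub>i c\<^sub>i / (z - x\<^sub>i)\<close> with one more pole than zeros,
  and Newton's identities relating the moments \<open>\<Sum>\<^sub>i c\<^sub>i x\<^sub>i\<^sup>d\<close> to the power sums \<open>\<Sum>\<^sub>i x\<^sub>i\<^sup>k - \<Sum>\<^sub>j y\<^sub>j\<^sup>k\<close>.\<close>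

locale partial_fraction =
  fixes I :: "'a set" and J :: "'b set" and x :: "'a \<Rightarrow> 'c::field" and y :: "'b \<Rightarrow> 'c"
  assumes finite_I: "finite I" and finite_J: "finite J" and inj_x: "inj_on x I" and card_I: "card I = card J + 1"
begin

definition pf_coeff :: "'a \<Rightarrow> 'c" where
  "pf_coeff i = (\<Prod>j\<in>J. x i - y j) / (\<Prod>i'\<in>I - {i}. x i - x i')"

definition lagrange_poly :: "'a \<Rightarrow> 'c poly" where
  "lagrange_poly i = (\<Prod>i'\<in>I - {i}. [:- x i', 1:])"

definition numerator_poly :: "'c poly" where
  "numerator_poly = (\<Prod>j\<in>J. [:- y j, 1:])"

lemma degree_lagrange_poly: "i \<in> I \<Longrightarrow> degree (lagrange_poly i) = card J"
  unfolding lagrange_poly_def using degree_prod_linear[of x "I - {i}"] finite_I card_I by simp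

lemma degree_numerator_poly: "degree numerator_poly = card J"
  unfolding numerator_poly_def by (rule degree_prod_linear)

lemma poly_lagrange_poly_node:
  assumes "i \<in> I" "i0 \<in> I"
  shows "poly (lagrange_poly i) (x i0) = (if i = i0 then (\<Prod>i'\<in>I - {i0}. x i0 - x i') else 0)"
proof (cases "i = i0")
  case False
  then have "(\<Prod>i'\<in>I - {i}. x i0 - x i') = 0" using assms finite_I by (intro prod_zero) auto
  then show ?thesis unfolding lagrange_poly_def using False by (simp add: poly_prod)
qed (simp add: lagrange_poly_def poly_prod)

lemma poly_sum_lagrange_poly_node:
  assumes i0: "i0 \<in> I"
  shows "poly (\<Sum>i\<in>I. smult (pf_coeff i) (lagrange_poly i)) (x i0) = poly numerator_poly (x i0)"
proof -
  have "(\<Prod>i'\<in>I - {i0}. x i0 - x i') \<noteq> 0"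
    using inj_x i0 finite_I by (auto simp: inj_on_def)
  moreover have "poly (\<Sum>i\<in>I. smult (pf_coeff i) (lagrange_poly i)) (x i0)
      = pf_coeff i0 * (\<Prod>i'\<in>I - {i0}. x i0 - x i')"
  proof -
    have "poly (\<Sum>i\<in>I. smult (pf_coeff i) (lagrange_poly i)) (x i0)
        = (\<Sum>i\<in>I. if i = i0 then pf_coeff i0 * (\<Prod>i'\<in>I - {i0}. x i0 - x i') else 0)"
      unfolding poly_sum using poly_lagrange_poly_node[OF _ i0] by (intro sum.cong) auto
    then show ?thesis using i0 finite_I by simp
  qed
  ultimately show ?thesis unfolding pf_coeff_def numerator_poly_def by (simp add: poly_prod)
qed

text \<open>Both sides have degree \<open>card J < card I\<close> and agree at the \<open>card I\<close> distinct nodes \<open>x i\<close>.\<close>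

lemma numerator_poly_eq_sum: "numerator_poly = (\<Sum>i\<in>I. smult (pf_coeff i) (lagrange_poly i))"
proof (rule ccontr)
  define D where "D = numerator_poly - (\<Sum>i\<in>I. smult (pf_coeff i) (lagrange_poly i))"
  assume "numerator_poly \<noteq> (\<Sum>i\<in>I. smult (pf_coeff i) (lagrange_poly i))"
  then have D: "D \<noteq> 0" unfolding D_def by simp
  have "degree D \<le> card J"
    unfolding D_def
    by (rule order.trans[OF degree_diff_le_max], rule max.boundedI)
       (auto simp: degree_numerator_poly degree_lagrange_poly intro!: degree_sum_le order.trans[OF degree_smult_le] finite_I)
  moreover have "x ` I \<subseteq> {z. poly D z = 0}"
    using poly_sum_lagrange_poly_node unfolding D_def by auto
  then have "card (x ` I) \<le> degree D"
    using card_mono[OF poly_roots_finite[OF D]] card_poly_roots_bound[OF D] by (meson order.trans)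
  ultimately show False using card_image[OF inj_x] card_I by simp
qed

definition lagrange_poly_rev :: "'a \<Rightarrow> 'c poly" where
  "lagrange_poly_rev i = (\<Prod>i'\<in>I - {i}. [:1, - x i':])"

definition numerator_poly_rev :: "'c poly" where
  "numerator_poly_rev = (\<Prod>j\<in>J. [:1, - y j:])"

lemma numerator_poly_rev_eq_sum: "numerator_poly_rev = (\<Sum>i\<in>I. smult (pf_coeff i) (lagrange_poly_rev i))"
proof (rule poly_eqI)
  fix k
  have lagrange_rev: "lagrange_poly_rev i = reflect_poly (lagrange_poly i)" for i unfolding lagrange_poly_rev_def lagrange_poly_def
    by (simp add: reflect_poly_prod reflect_poly_linear)
  have numerator_rev: "numerator_poly_rev = reflect_poly numerator_poly" unfolding numerator_poly_rev_def numerator_poly_def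
    by (simp add: reflect_poly_prod reflect_poly_linear)
  have "coeff numerator_poly_rev k = (if k > card J then 0 else coeff numerator_poly (card J - k))"
    unfolding numerator_rev coeff_reflect_poly degree_numerator_poly ..
  also have "\<dots> = (\<Sum>i\<in>I. pf_coeff i * (if k > card J then 0 else coeff (lagrange_poly i) (card J - k)))"
    by (subst numerator_poly_eq_sum) (simp add: coeff_sum)
  also have "\<dots> = (\<Sum>i\<in>I. pf_coeff i * coeff (lagrange_poly_rev i) k)"
    by (intro sum.cong) (auto simp: lagrange_rev coeff_reflect_poly degree_lagrange_poly)
  also have "\<dots> = coeff (\<Sum>i\<in>I. smult (pf_coeff i) (lagrange_poly_rev i)) k" by (simp add: coeff_sum)
  finally show "coeff numerator_poly_rev k = coeff (\<Sum>i\<in>I. smult (pf_coeff i) (lagrange_poly_rev i)) k" .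
qed

definition moment :: "nat \<Rightarrow> 'c" where
  "moment d = (\<Sum>i\<in>I. x i ^ d * pf_coeff i)"

definition power_sum_diff :: "nat \<Rightarrow> 'c" where
  "power_sum_diff k = (\<Sum>i\<in>I. x i ^ k) - (\<Sum>j\<in>J. y j ^ k)"

end

lemma fps_of_poly_linear: "fps_of_poly [:1, - c:] = 1 - fps_const (c::'a::field) * fps_X"
  by (rule fps_ext) (auto simp: coeff_pCons split: nat.splits)

definition geom_fps :: "'a::field \<Rightarrow> 'a fps" where
  "geom_fps c = Abs_fps (\<lambda>n. c ^ n)"

definition shifted_geom_fps :: "'a::field \<Rightarrow> 'a fps" where
  "shifted_geom_fps c = Abs_fps (\<lambda>k. if k = 0 then 0 else c ^ k)"

lemma geom_fps_inverse: "(1 - fps_const c * fps_X) * geom_fps c = 1"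
proof (rule fps_ext)
  fix n
  show "((1 - fps_const c * fps_X) * geom_fps c) $ n = (1 :: 'a fps) $ n"
    by (cases n) (simp_all add: algebra_simps geom_fps_def fps_mult_left_const_nth mult.assoc)
qed

lemma shifted_geom_fps_eq: "(1 - fps_const c * fps_X) * shifted_geom_fps c = fps_const c * fps_X"
proof (rule fps_ext)
  fix n
  show "((1 - fps_const c * fps_X) * shifted_geom_fps c) $ n = (fps_const c * fps_X) $ n"
  proof (cases n)
    case 0 then show ?thesis by (simp add: algebra_simps shifted_geom_fps_def mult.assoc)
  next
    case (Suc m)
    then show ?thesis by (cases m) (simp_all add: algebra_simps shifted_geom_fps_def mult.assoc)
  qed
qed

lemma prod_linear_fps_nth_0:
  assumes "finite C"
  shows "(\<Prod>i\<in>C. 1 - fps_const (c i) * fps_X) $ 0 = (1::'a::field)"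
  using assms by (induction C rule: finite_induct) auto

lemma fps_log_deriv_prod_linear:
  fixes c :: "'b \<Rightarrow> 'a::field"
  assumes "finite C"
  shows "fps_X * fps_deriv (\<Prod>i\<in>C. 1 - fps_const (c i) * fps_X)
       = - (\<Prod>i\<in>C. 1 - fps_const (c i) * fps_X) * (\<Sum>i\<in>C. shifted_geom_fps (c i))"
  using assms
proof (induction C rule: finite_induct)
  case (insert a F)
  define L where "L = 1 - fps_const (c a) * fps_X"
  define P where "P = (\<Prod>i\<in>F. 1 - fps_const (c i) * fps_X)"
  define M where "M = (\<Sum>i\<in>F. shifted_geom_fps (c i))"
  have IH: "fps_X * fps_deriv P = - P * M" using insert.IH unfolding P_def M_def .
  have "fps_deriv L = - fps_const (c a)" unfolding L_def by simp
  then have "fps_X * fps_deriv L = - (fps_const (c a) * fps_X)" by (simp add: mult.commute)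
  also have "\<dots> = - (L * shifted_geom_fps (c a))" using shifted_geom_fps_eq[of "c a"] unfolding L_def by simp
  finally have dL: "fps_X * fps_deriv L = - (L * shifted_geom_fps (c a))" .
  have "fps_X * fps_deriv (L * P) = L * (fps_X * fps_deriv P) + (fps_X * fps_deriv L) * P"
    by (simp add: fps_deriv_mult algebra_simps)
  also have "\<dots> = - (L * P) * (shifted_geom_fps (c a) + M)" unfolding IH dL by (simp add: algebra_simps)
  finally show ?case using insert unfolding L_def P_def M_def by simp
qed simp

context partial_fraction
begin

definition moment_fps :: "'c fps" where
  "moment_fps = (\<Sum>i\<in>I. fps_const (pf_coeff i) * geom_fps (x i))"

definition denominator_fps :: "'c fps" where
  "denominator_fps = (\<Prod>i\<in>I. 1 - fps_const (x i) * fps_X)"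

definition numerator_fps :: "'c fps" where
  "numerator_fps = (\<Prod>j\<in>J. 1 - fps_const (y j) * fps_X)"

lemma moment_fps_nth: "moment_fps $ d = moment d"
  unfolding moment_fps_def moment_def by (simp add: fps_sum_nth geom_fps_def mult.commute)

lemma moment_fps_mult_denominator_fps: "moment_fps * denominator_fps = numerator_fps"
proof -
  have "numerator_fps = fps_of_poly numerator_poly_rev" unfolding numerator_fps_def numerator_poly_rev_def
    by (simp add: fps_of_poly_prod fps_of_poly_linear)
  also have "\<dots> = (\<Sum>i\<in>I. fps_const (pf_coeff i) * (\<Prod>i'\<in>I - {i}. 1 - fps_const (x i') * fps_X))"
    unfolding numerator_poly_rev_eq_sum lagrange_poly_rev_def
      by (simp add: fps_of_poly_sum fps_of_poly_smult fps_of_poly_prod fps_of_poly_linear)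
  also have "\<dots> = (\<Sum>i\<in>I. fps_const (pf_coeff i) * geom_fps (x i) * denominator_fps)"
  proof (rule sum.cong)
    fix i assume i: "i \<in> I"
    have "denominator_fps = (1 - fps_const (x i) * fps_X) * (\<Prod>i'\<in>I - {i}. 1 - fps_const (x i') * fps_X)"
      unfolding denominator_fps_def using prod.remove[OF finite_I i] .
    then have "geom_fps (x i) * denominator_fps = (\<Prod>i'\<in>I - {i}. 1 - fps_const (x i') * fps_X)"
      using geom_fps_inverse[of "x i"] by (simp add: mult.assoc[symmetric] mult.commute)
    then show "fps_const (pf_coeff i) * (\<Prod>i'\<in>I - {i}. 1 - fps_const (x i') * fps_X) = fps_const (pf_coeff i) * geom_fps (x i) * denominator_fps"
      by (simp add: mult.assoc)
  qed simp
  also have "\<dots> = moment_fps * denominator_fps" unfolding moment_fps_def by (simp add: sum_distrib_right)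
  finally show ?thesis by simp
qed

lemma denominator_fps_nonzero: "denominator_fps \<noteq> 0"
proof -
  have "denominator_fps $ 0 = 1" unfolding denominator_fps_def by (rule prod_linear_fps_nth_0[OF finite_I])
  then show ?thesis by auto
qed

lemma moment_fps_log_deriv: "fps_X * fps_deriv moment_fps = moment_fps * ((\<Sum>i\<in>I. shifted_geom_fps (x i)) - (\<Sum>j\<in>J. shifted_geom_fps (y j)))"
proof -
  define poles where "poles = (\<Sum>i\<in>I. shifted_geom_fps (x i))"
  define zeros where "zeros = (\<Sum>j\<in>J. shifted_geom_fps (y j))"
  have deriv_denominator: "fps_X * fps_deriv denominator_fps = - denominator_fps * poles" unfolding denominator_fps_def poles_def
    by (rule fps_log_deriv_prod_linear[OF finite_I])
  have deriv_numerator: "fps_X * fps_deriv numerator_fps = - numerator_fps * zeros" unfolding numerator_fps_def zeros_def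
    by (rule fps_log_deriv_prod_linear[OF finite_J])
  have "fps_X * fps_deriv (moment_fps * denominator_fps) = fps_X * fps_deriv numerator_fps"
    using moment_fps_mult_denominator_fps by simp
  then have "moment_fps * (fps_X * fps_deriv denominator_fps) + (fps_X * fps_deriv moment_fps) * denominator_fps = fps_X * fps_deriv numerator_fps"
    by (simp add: fps_deriv_mult algebra_simps)
  then have "moment_fps * (- denominator_fps * poles) + (fps_X * fps_deriv moment_fps) * denominator_fps = - (moment_fps * denominator_fps) * zeros"
    unfolding deriv_denominator deriv_numerator moment_fps_mult_denominator_fps .
  then have "denominator_fps * (fps_X * fps_deriv moment_fps - moment_fps * (poles - zeros)) = 0" by (simp add: algebra_simps)
  then have "fps_X * fps_deriv moment_fps - moment_fps * (poles - zeros) = 0" using denominator_fps_nonzero by simp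
  then show ?thesis unfolding poles_def zeros_def by simp
qed

lemma moment_0: "moment 0 = 1"
proof -
  have "(moment_fps * denominator_fps) $ 0 = numerator_fps $ 0" using moment_fps_mult_denominator_fps by simp
  moreover have "denominator_fps $ 0 = 1" unfolding denominator_fps_def by (rule prod_linear_fps_nth_0[OF finite_I])
  moreover have "numerator_fps $ 0 = 1" unfolding numerator_fps_def by (rule prod_linear_fps_nth_0[OF finite_J])
  ultimately show ?thesis using moment_fps_nth[of 0] by simp
qed

lemma newton_moment: "of_nat d * moment d = (\<Sum>i<d. moment i * power_sum_diff (d - i))"
proof -
  define Lf where "Lf = (\<Sum>i\<in>I. shifted_geom_fps (x i)) - (\<Sum>j\<in>J. shifted_geom_fps (y j))"
  have Lnth: "Lf $ k = (if k = 0 then 0 else power_sum_diff k)" for k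
    unfolding Lf_def power_sum_diff_def by (simp add: fps_sum_nth shifted_geom_fps_def)
  have "(fps_X * fps_deriv moment_fps) $ d = (moment_fps * Lf) $ d" using moment_fps_log_deriv unfolding Lf_def by simp
  moreover have "(fps_X * fps_deriv moment_fps) $ d = of_nat d * moment d"
    by (cases d) (simp_all add: fps_X_mult_nth moment_fps_nth)
  moreover have "(moment_fps * Lf) $ d = (\<Sum>i<d. moment i * power_sum_diff (d - i))"
  proof -
    have "(moment_fps * Lf) $ d = (\<Sum>i = 0..d. moment i * Lf $ (d - i))" by (simp add: fps_mult_nth moment_fps_nth)
    also have "\<dots> = (\<Sum>i<Suc d. moment i * Lf $ (d - i))" by (simp add: atLeast0AtMost lessThan_Suc_atMost)
    also have "\<dots> = (\<Sum>i<d. moment i * Lf $ (d - i))" by (simp add: Lnth)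
    also have "\<dots> = (\<Sum>i<d. moment i * power_sum_diff (d - i))" by (intro sum.cong) (auto simp: Lnth)
    finally show ?thesis .
  qed
  ultimately show ?thesis by simp
qed

end

section \<open>Weighted spans of the functions \<open>q\<^sub>\<delta>\<close>\<close>

definition part_sets :: "nat set set" where
  "part_sets = {S. finite S \<and> 0 \<notin> S}"

definition q_part_set :: "nat list \<Rightarrow> nat set \<Rightarrow> rat" where
  "q_part_set d S = prod_list (map (\<lambda>k. q_set k S) d)"

definition partitions_upto :: "nat \<Rightarrow> nat list set" where
  "partitions_upto w = {d. int_partition d \<and> sum_list d \<le> w}"

definition q_span :: "nat \<Rightarrow> (nat set \<Rightarrow> rat) \<Rightarrow> bool" where
  "q_span w f \<longleftrightarrow> (\<exists>xi. \<forall>S\<in>part_sets. f S = (\<Sum>d\<in>partitions_upto w. xi d * q_part_set d S))"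

lemma length_le_sum_list: "(\<forall>x\<in>set xs. 1 \<le> x) \<Longrightarrow> length xs \<le> sum_list (xs :: nat list)"
  by (induction xs) auto

lemma finite_partitions_upto: "finite (partitions_upto w)"
proof -
  have "partitions_upto w \<subseteq> {xs. set xs \<subseteq> {..w} \<and> length xs \<le> w}"
  proof
    fix d assume "d \<in> partitions_upto w"
    then have d: "int_partition d" "sum_list d \<le> w" unfolding partitions_upto_def by auto
    have "\<forall>x\<in>set d. 1 \<le> x" using d(1) unfolding Defs.int_partition_def by auto
    then have "length d \<le> w" using length_le_sum_list[of d] d(2) by simp
    moreover have "set d \<subseteq> {..w}" using member_le_sum_list[of _ d] d(2) by fastforce
    ultimately show "d \<in> {xs. set xs \<subseteq> {..w} \<and> length xs \<le> w}" by simp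
  qed
  then show ?thesis by (rule finite_subset) (rule finite_lists_length_le, simp)
qed

lemma partitions_upto_mono: "w \<le> w' \<Longrightarrow> partitions_upto w \<subseteq> partitions_upto w'"
  unfolding partitions_upto_def by auto

lemma partitions_upto_0: "partitions_upto 0 = {[]}"
proof -
  have "d = []" if "int_partition d" "sum_list d = 0" for d
    using that unfolding Defs.int_partition_def by (cases d) auto
  moreover have "int_partition []" unfolding Defs.int_partition_def by simp
  ultimately show ?thesis unfolding partitions_upto_def by auto
qed

lemma q_span_mono:
  assumes "q_span w f" "w \<le> w'"
  shows "q_span w' f"
proof -
  from assms(1) obtain xi where xi: "\<forall>S\<in>part_sets. f S = (\<Sum>d\<in>partitions_upto w. xi d * q_part_set d S)"
    unfolding q_span_def by blast
  define xi' where "xi' d = (if d \<in> partitions_upto w then xi d else 0)" for d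
  have "(\<Sum>d\<in>partitions_upto w'. xi' d * q_part_set d S) = (\<Sum>d\<in>partitions_upto w. xi d * q_part_set d S)" for S
    by (rule sum.mono_neutral_cong_right)
      (use partitions_upto_mono[OF assms(2)] in \<open>auto simp: finite_partitions_upto xi'_def\<close>)
  then show ?thesis unfolding q_span_def using xi by (intro exI[of _ xi']) auto
qed

lemma q_span_zero: "q_span w (\<lambda>S. 0)"
  unfolding q_span_def by (intro exI[of _ "\<lambda>d. 0"]) simp

lemma q_span_add: "q_span w f \<Longrightarrow> q_span w g \<Longrightarrow> q_span w (\<lambda>S. f S + g S)"
proof -
  assume "q_span w f" "q_span w g"
  then obtain xi1 xi2
    where "\<forall>S\<in>part_sets. f S = (\<Sum>d\<in>partitions_upto w. xi1 d * q_part_set d S)" "\<forall>S\<in>part_sets. g S = (\<Sum>d\<in>partitions_upto w. xi2 d * q_part_set d S)"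
    unfolding q_span_def by blast
  then show ?thesis unfolding q_span_def
    by (intro exI[of _ "\<lambda>d. xi1 d + xi2 d"]) (simp add: sum.distrib distrib_right)
qed

lemma q_span_smult: "q_span w f \<Longrightarrow> q_span w (\<lambda>S. c * f S)"
proof -
  assume "q_span w f"
  then obtain xi where "\<forall>S\<in>part_sets. f S = (\<Sum>d\<in>partitions_upto w. xi d * q_part_set d S)"
    unfolding q_span_def by blast
  then show ?thesis unfolding q_span_def
    by (intro exI[of _ "\<lambda>d. c * xi d"]) (simp add: sum_distrib_left mult.assoc)
qed

lemma q_span_cong: "q_span w f \<Longrightarrow> (\<And>S. S \<in> part_sets \<Longrightarrow> g S = f S) \<Longrightarrow> q_span w g"
  unfolding q_span_def by auto

lemma q_span_const: "q_span 0 (\<lambda>S. c)"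
  unfolding q_span_def partitions_upto_0 by (intro exI[of _ "\<lambda>d. c"]) (simp add: q_part_set_def)

lemma q_span_q_set: "1 \<le> k \<Longrightarrow> q_span k (q_set k)"
proof -
  assume k: "1 \<le> k"
  have mem: "[k] \<in> partitions_upto k" unfolding partitions_upto_def Defs.int_partition_def using k by auto
  have "q_set k S = (\<Sum>d\<in>partitions_upto k. (if d = [k] then 1 else 0) * q_part_set d S)" for S
  proof -
    have "(\<Sum>d\<in>partitions_upto k. (if d = [k] then 1 else 0) * q_part_set d S) = (\<Sum>d\<in>partitions_upto k. if d = [k] then q_part_set d S else 0)"
      by (intro sum.cong) auto
    also have "\<dots> = q_part_set [k] S" using mem finite_partitions_upto by (simp add: sum.delta')
    finally show ?thesis by (simp add: q_part_set_def)
  qed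
  then show ?thesis unfolding q_span_def by (intro exI[of _ "\<lambda>d. if d = [k] then 1 else 0"]) auto
qed

lemma q_span_sum:
  assumes "finite A" "\<And>a. a \<in> A \<Longrightarrow> q_span w (f a)"
  shows "q_span w (\<lambda>S. \<Sum>a\<in>A. f a S)"
  using assms
proof (induction A rule: finite_induct)
  case empty then show ?case by (simp add: q_span_zero)
next
  case (insert a F)
  have "q_span w (\<lambda>S. f a S + (\<Sum>a\<in>F. f a S))" by (rule q_span_add) (use insert in auto)
  then show ?case using insert(1,2) by simp
qed

definition merge_partitions :: "nat list \<times> nat list \<Rightarrow> nat list" where
  "merge_partitions p = rev (sort (fst p @ snd p))"

lemma q_part_set_perm: "mset d1 = mset d2 \<Longrightarrow> q_part_set d1 S = q_part_set d2 S"
  unfolding q_part_set_def by (metis mset_map prod_mset_prod_list)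

lemma q_part_set_merge: "q_part_set (merge_partitions p) S = q_part_set (fst p) S * q_part_set (snd p) S"
proof -
  have "q_part_set (merge_partitions p) S = q_part_set (fst p @ snd p) S"
    by (rule q_part_set_perm) (simp add: merge_partitions_def)
  then show ?thesis by (simp add: q_part_set_def)
qed

lemma merge_partitions_in: "d1 \<in> partitions_upto w1 \<Longrightarrow> d2 \<in> partitions_upto w2 \<Longrightarrow> merge_partitions (d1, d2) \<in> partitions_upto (w1 + w2)"
proof -
  assume a: "d1 \<in> partitions_upto w1" "d2 \<in> partitions_upto w2"
  have "sorted_wrt (\<ge>) (rev (sort (d1 @ d2)))" by (simp add: sorted_wrt_rev)
  moreover have "\<forall>x\<in>set (merge_partitions (d1, d2)). 0 < x" using a
    unfolding merge_partitions_def partitions_upto_def Defs.int_partition_def by auto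
  moreover have "sum_list (merge_partitions (d1, d2)) = sum_list d1 + sum_list d2"
    unfolding merge_partitions_def by (simp add: sum_mset_sum_list[symmetric])
  ultimately show ?thesis using a unfolding partitions_upto_def Defs.int_partition_def merge_partitions_def by auto
qed

lemma q_span_mult:
  assumes "q_span w1 f" "q_span w2 g"
  shows "q_span (w1 + w2) (\<lambda>S. f S * g S)"
proof -
  obtain xi1 where xi1: "\<forall>S\<in>part_sets. f S = (\<Sum>d\<in>partitions_upto w1. xi1 d * q_part_set d S)"
    using assms(1) unfolding q_span_def by blast
  obtain xi2 where xi2: "\<forall>S\<in>part_sets. g S = (\<Sum>d\<in>partitions_upto w2. xi2 d * q_part_set d S)"
    using assms(2) unfolding q_span_def by blast
  define pairs where "pairs = partitions_upto w1 \<times> partitions_upto w2"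
  define c where "c p = xi1 (fst p) * xi2 (snd p)" for p
  define xi where "xi d = (\<Sum>p\<in>{p \<in> pairs. merge_partitions p = d}. c p)" for d
  have fPP: "finite pairs" unfolding pairs_def using finite_partitions_upto by simp
  have img: "merge_partitions ` pairs \<subseteq> partitions_upto (w1 + w2)" unfolding pairs_def using merge_partitions_in by auto
  have "f S * g S = (\<Sum>d\<in>partitions_upto (w1 + w2). xi d * q_part_set d S)" if S: "S \<in> part_sets" for S
  proof -
    have "f S * g S = (\<Sum>d1\<in>partitions_upto w1. \<Sum>d2\<in>partitions_upto w2. (xi1 d1 * q_part_set d1 S) * (xi2 d2 * q_part_set d2 S))"
      using xi1 xi2 S by (simp add: sum_product)
    also have "\<dots> = (\<Sum>p\<in>pairs. c p * q_part_set (merge_partitions p) S)"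
      unfolding pairs_def c_def sum.cartesian_product
      by (intro sum.cong) (auto simp: q_part_set_merge algebra_simps)
    also have "\<dots> = (\<Sum>d\<in>partitions_upto (w1 + w2). \<Sum>p\<in>{p \<in> pairs. merge_partitions p = d}. c p * q_part_set (merge_partitions p) S)"
      by (rule sum.group[OF fPP finite_partitions_upto img, symmetric])
    also have "\<dots> = (\<Sum>d\<in>partitions_upto (w1 + w2). xi d * q_part_set d S)"
      unfolding xi_def sum_distrib_right by (intro sum.cong) auto
    finally show ?thesis .
  qed
  then show ?thesis unfolding q_span_def by blast
qed


text \<open>Polynomials in \<open>T(a)\<close> of weight \<open>w\<close>, where \<open>T(a)\<close> has weight \<open>1\<close>.\<close>

definition q_tri_span :: "nat \<Rightarrow> (nat set \<Rightarrow> nat \<Rightarrow> rat) \<Rightarrow> bool" where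
  "q_tri_span w f \<longleftrightarrow> (\<exists>g. (\<forall>e\<le>w. q_span (w - e) (g e)) \<and>
     (\<forall>S\<in>part_sets. \<forall>a. f S a = (\<Sum>e\<le>w. g e S * tri a ^ e)))"

lemma q_tri_span_const: "q_span w h \<Longrightarrow> q_tri_span w (\<lambda>S a. h S)"
proof -
  assume h: "q_span w h"
  define g :: "nat \<Rightarrow> nat set \<Rightarrow> rat" where "g e = (if e = 0 then h else (\<lambda>S. 0))" for e
  have "q_span (w - e) (g e)" if "e \<le> w" for e
    unfolding g_def using h q_span_zero by auto
  moreover have "h S = (\<Sum>e\<le>w. g e S * tri a ^ e)" for S a
  proof -
    have "(\<Sum>e\<le>w. g e S * tri a ^ e) = (\<Sum>e\<le>w. if e = 0 then h S else 0)"
      unfolding g_def by (intro sum.cong) auto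
    also have "\<dots> = h S" by (simp add: sum.delta)
    finally show ?thesis by simp
  qed
  ultimately show ?thesis unfolding q_tri_span_def by blast
qed

lemma q_tri_span_zero: "q_tri_span w (\<lambda>S a. 0)"
  unfolding q_tri_span_def by (intro exI[of _ "\<lambda>e S. 0"]) (simp add: q_span_zero)

lemma q_tri_span_cong: "q_tri_span w f \<Longrightarrow> (\<And>S a. S \<in> part_sets \<Longrightarrow> f' S a = f S a) \<Longrightarrow> q_tri_span w f'"
  unfolding q_tri_span_def by auto

lemma q_tri_span_add: "q_tri_span w f1 \<Longrightarrow> q_tri_span w f2 \<Longrightarrow> q_tri_span w (\<lambda>S a. f1 S a + f2 S a)"
proof -
  assume "q_tri_span w f1" "q_tri_span w f2"
  then obtain g1 g2
    where g1: "\<forall>e\<le>w. q_span (w - e) (g1 e)" "\<forall>S\<in>part_sets. \<forall>a. f1 S a = (\<Sum>e\<le>w. g1 e S * tri a ^ e)"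
    and g2: "\<forall>e\<le>w. q_span (w - e) (g2 e)" "\<forall>S\<in>part_sets. \<forall>a. f2 S a = (\<Sum>e\<le>w. g2 e S * tri a ^ e)"
    unfolding q_tri_span_def by blast
  show ?thesis unfolding q_tri_span_def
    by (intro exI[of _ "\<lambda>e S. g1 e S + g2 e S"]) (use g1 g2 in \<open>auto intro: q_span_add simp: sum.distrib distrib_right\<close>)
qed

lemma q_tri_span_smult: "q_tri_span w f \<Longrightarrow> q_tri_span w (\<lambda>S a. c * f S a)"
proof -
  assume "q_tri_span w f"
  then obtain g
    where g: "\<forall>e\<le>w. q_span (w - e) (g e)" "\<forall>S\<in>part_sets. \<forall>a. f S a = (\<Sum>e\<le>w. g e S * tri a ^ e)"
    unfolding q_tri_span_def by blast
  show ?thesis unfolding q_tri_span_def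
    by (intro exI[of _ "\<lambda>e S. c * g e S"]) (use g in \<open>auto intro: q_span_smult simp: sum_distrib_left mult.assoc\<close>)
qed

lemma q_tri_span_mono: "q_tri_span w f \<Longrightarrow> w \<le> w' \<Longrightarrow> q_tri_span w' f"
proof -
  assume "q_tri_span w f" and ww: "w \<le> w'"
  then obtain g
    where g: "\<forall>e\<le>w. q_span (w - e) (g e)" "\<forall>S\<in>part_sets. \<forall>a. f S a = (\<Sum>e\<le>w. g e S * tri a ^ e)"
    unfolding q_tri_span_def by blast
  define g' where "g' e = (if e \<le> w then g e else (\<lambda>S. 0))" for e
  have "q_span (w' - e) (g' e)" if "e \<le> w'" for e
    unfolding g'_def using g(1) ww by (auto intro: q_span_mono q_span_zero)
  moreover have "(\<Sum>e\<le>w'. g' e S * tri a ^ e) = (\<Sum>e\<le>w. g e S * tri a ^ e)" for S a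
  proof -
    have "(\<Sum>e\<le>w'. g' e S * tri a ^ e) = (\<Sum>e\<le>w'. if e \<in> {..w} then g e S * tri a ^ e else 0)"
      unfolding g'_def by (intro sum.cong) auto
    also have "\<dots> = (\<Sum>e\<in>{..w'} \<inter> {..w}. g e S * tri a ^ e)" by (rule sum.inter_restrict[symmetric]) simp
    also have "{..w'} \<inter> {..w} = {..w}" using ww by auto
    finally show ?thesis .
  qed
  ultimately show ?thesis using g(2) unfolding q_tri_span_def by (intro exI[of _ g']) auto
qed

lemma q_tri_span_tri: "q_tri_span 1 (\<lambda>S a. tri a)"
proof -
  define g :: "nat \<Rightarrow> nat set \<Rightarrow> rat"
    where "g e = (if e = 1 then (\<lambda>S. 1) else (\<lambda>S. 0))" for e
  have "q_span (1 - e) (g e)" if "e \<le> 1" for e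
    using that unfolding g_def by (cases e) (auto intro: q_span_const q_span_zero)
  moreover have "tri a = (\<Sum>e\<le>1. g e S * tri a ^ e)" for S a
    unfolding g_def by (simp add: atMost_Suc)
  ultimately show ?thesis unfolding q_tri_span_def by blast
qed

lemma q_tri_span_mult:
  assumes "q_tri_span w1 f1" "q_tri_span w2 f2"
  shows "q_tri_span (w1 + w2) (\<lambda>S a. f1 S a * f2 S a)"
proof -
  obtain g1 where g1: "\<forall>e\<le>w1. q_span (w1 - e) (g1 e)" "\<forall>S\<in>part_sets. \<forall>a. f1 S a = (\<Sum>e\<le>w1. g1 e S * tri a ^ e)"
    using assms(1) unfolding q_tri_span_def by blast
  obtain g2 where g2: "\<forall>e\<le>w2. q_span (w2 - e) (g2 e)" "\<forall>S\<in>part_sets. \<forall>a. f2 S a = (\<Sum>e\<le>w2. g2 e S * tri a ^ e)"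
    using assms(2) unfolding q_tri_span_def by blast
  define PP where "PP = {..w1} \<times> {..w2}"
  define h where "h p S = g1 (fst p) S * g2 (snd p) S" for p S
  define g where "g e S = (\<Sum>p\<in>{p \<in> PP. fst p + snd p = e}. h p S)" for e S
  have fPP: "finite PP" unfolding PP_def by simp
  have img: "(\<lambda>p. fst p + snd p) ` PP \<subseteq> {..w1 + w2}" unfolding PP_def by auto
  have "q_span (w1 + w2 - e) (g e)" if "e \<le> w1 + w2" for e
    unfolding g_def
  proof (rule q_span_sum)
    show "finite {p \<in> PP. fst p + snd p = e}" using fPP by simp
  next
    fix p assume p: "p \<in> {p \<in> PP. fst p + snd p = e}"
    then have "q_span ((w1 - fst p) + (w2 - snd p)) (h p)" unfolding h_def PP_def
      by (intro q_span_mult) (use g1 g2 in auto)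
    moreover have "(w1 - fst p) + (w2 - snd p) = w1 + w2 - e" using p unfolding PP_def by auto
    ultimately show "q_span (w1 + w2 - e) (h p)" by simp
  qed
  moreover have "f1 S a * f2 S a = (\<Sum>e\<le>w1 + w2. g e S * tri a ^ e)" if S: "S \<in> part_sets" for S a
  proof -
    have "f1 S a * f2 S a = (\<Sum>e1\<le>w1. \<Sum>e2\<le>w2. (g1 e1 S * tri a ^ e1) * (g2 e2 S * tri a ^ e2))"
      using g1 g2 S by (simp add: sum_product)
    also have "\<dots> = (\<Sum>p\<in>PP. h p S * tri a ^ (fst p + snd p))"
      unfolding PP_def h_def sum.cartesian_product by (intro sum.cong) (auto simp: power_add algebra_simps)
    also have "\<dots> = (\<Sum>e\<le>w1 + w2. \<Sum>p\<in>{p \<in> PP. fst p + snd p = e}. h p S * tri a ^ (fst p + snd p))"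
      by (rule sum.group[OF fPP _ img, symmetric]) simp
    also have "\<dots> = (\<Sum>e\<le>w1 + w2. g e S * tri a ^ e)"
      unfolding g_def sum_distrib_right by (intro sum.cong) auto
    finally show ?thesis .
  qed
  ultimately show ?thesis unfolding q_tri_span_def by blast
qed

lemma q_tri_span_sum:
  assumes "finite A" "\<And>x. x \<in> A \<Longrightarrow> q_tri_span w (f x)"
  shows "q_tri_span w (\<lambda>S a. \<Sum>x\<in>A. f x S a)"
  using assms
proof (induction A rule: finite_induct)
  case empty then show ?case by (simp add: q_tri_span_zero)
next
  case (insert b F)
  have "q_tri_span w (\<lambda>S a. f b S a + (\<Sum>x\<in>F. f x S a))" by (rule q_tri_span_add) (use insert in auto)
  then show ?case using insert(1,2) by simp
qed

lemma q_tri_span_power: "q_tri_span 1 f \<Longrightarrow> q_tri_span n (\<lambda>S a. f S a ^ n)"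
proof (induction n)
  case 0
  show ?case by (rule q_tri_span_cong[OF q_tri_span_const[OF q_span_const[of 1]]]) simp
next
  case (Suc n)
  have "q_tri_span (1 + n) (\<lambda>S a. f S a * f S a ^ n)" by (rule q_tri_span_mult) (use Suc in auto)
  then show ?case by simp
qed

section \<open>Moments of the residues\<close>

definition residue_moment :: "nat \<Rightarrow> nat set \<Rightarrow> rat" where
  "residue_moment d S = (\<Sum>a\<in>insert 0 S. tri a ^ d * residue S a)"

lemma partial_fraction_residue: "S \<in> part_sets \<Longrightarrow> partial_fraction (insert 0 S) S tri"
  unfolding partial_fraction_def part_sets_def using inj_on_subset[OF inj_tri] by (auto simp: card_insert_if)

lemma residue_moment_newton:
  assumes S: "S \<in> part_sets"
  shows "residue_moment 0 S = 1" "of_nat d * residue_moment d S = (\<Sum>i<d. residue_moment i S * q_set (d - i) S)"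
proof -
  interpret pf: partial_fraction "insert 0 S" S tri "\<lambda>b. tri (b - 1)" by (rule partial_fraction_residue[OF S])
  have coeff_eq: "pf.pf_coeff a = residue S a" for a unfolding pf.pf_coeff_def residue_def ..
  have moment_eq: "pf.moment d' = residue_moment d' S" for d' unfolding pf.moment_def residue_moment_def coeff_eq ..
  have power_sum_eq: "pf.power_sum_diff k = q_set k S" if "1 \<le> k" for k
  proof -
    have "0 \<notin> S" using S unfolding part_sets_def by auto
    then have "pf.power_sum_diff k = tri 0 ^ k + (\<Sum>a\<in>S. tri a ^ k) - (\<Sum>b\<in>S. tri (b - 1) ^ k)"
      unfolding pf.power_sum_diff_def using S unfolding part_sets_def by simp
    also have "\<dots> = q_set k S" unfolding q_set_def tri_0 using that by (simp add: sum_subtractf)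
    finally show ?thesis .
  qed
  show "residue_moment 0 S = 1" using pf.moment_0 moment_eq by simp
  have "of_nat d * residue_moment d S = (\<Sum>i<d. pf.moment i * pf.power_sum_diff (d - i))"
    using pf.newton_moment[of d] moment_eq by simp
  also have "\<dots> = (\<Sum>i<d. residue_moment i S * q_set (d - i) S)" using moment_eq power_sum_eq
    by (intro sum.cong) auto
  finally show "of_nat d * residue_moment d S = (\<Sum>i<d. residue_moment i S * q_set (d - i) S)" .
qed

lemma q_span_residue_moment: "q_span d (residue_moment d)"
proof (induction d rule: less_induct)
  case (less d)
  show ?case
  proof (cases "d = 0")
    case True
    then show ?thesis using q_span_cong[OF q_span_const[of 1]] residue_moment_newton(1) by auto
  next
    case False
    have "q_span d (\<lambda>S. (1 / of_nat d) * (\<Sum>i<d. residue_moment i S * q_set (d - i) S))"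
    proof (rule q_span_smult, rule q_span_sum)
      fix i assume i: "i \<in> {..<d}"
      have "q_span (i + (d - i)) (\<lambda>S. residue_moment i S * q_set (d - i) S)"
        by (rule q_span_mult) (use less i in \<open>auto intro: q_span_q_set\<close>)
      then show "q_span d (\<lambda>S. residue_moment i S * q_set (d - i) S)" using i by simp
    qed simp
    moreover have "residue_moment d S = (1 / of_nat d) * (\<Sum>i<d. residue_moment i S * q_set (d - i) S)" if "S \<in> part_sets" for S
      using residue_moment_newton(2)[OF that, of d] False by (simp add: field_simps)
    ultimately show ?thesis by (rule q_span_cong)
  qed
qed

lemma sum_residue: "S \<in> part_sets \<Longrightarrow> (\<Sum>a\<in>insert 0 S. residue S a) = 1"
  using residue_moment_newton(1)[of S] unfolding residue_moment_def by simp

lemma q_span_sum_residue: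
  assumes "q_tri_span w f"
  shows "q_span w (\<lambda>S. \<Sum>a\<in>insert 0 S. residue S a * f S a)"
proof -
  obtain g where g: "\<forall>e\<le>w. q_span (w - e) (g e)" "\<forall>S\<in>part_sets. \<forall>a. f S a = (\<Sum>e\<le>w. g e S * tri a ^ e)"
    using assms unfolding q_tri_span_def by blast
  have "q_span w (\<lambda>S. \<Sum>e\<le>w. g e S * residue_moment e S)"
  proof (rule q_span_sum)
    fix e assume e: "e \<in> {..w}"
    have "q_span ((w - e) + e) (\<lambda>S. g e S * residue_moment e S)"
      by (rule q_span_mult) (use g e q_span_residue_moment in auto)
    then show "q_span w (\<lambda>S. g e S * residue_moment e S)" using e by simp
  qed simp
  moreover have "(\<Sum>a\<in>insert 0 S. residue S a * f S a) = (\<Sum>e\<le>w. g e S * residue_moment e S)" if S: "S \<in> part_sets" for S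
  proof -
    have "(\<Sum>a\<in>insert 0 S. residue S a * f S a) = (\<Sum>a\<in>insert 0 S. \<Sum>e\<le>w. residue S a * (g e S * tri a ^ e))"
      using g(2) S by (simp add: sum_distrib_left)
    also have "\<dots> = (\<Sum>e\<le>w. \<Sum>a\<in>insert 0 S. residue S a * (g e S * tri a ^ e))" by (rule sum.swap)
    also have "\<dots> = (\<Sum>e\<le>w. g e S * residue_moment e S)" unfolding residue_moment_def sum_distrib_left
      by (intro sum.cong) (auto simp: algebra_simps)
    finally show ?thesis .
  qed
  ultimately show ?thesis by (rule q_span_cong)
qed


section \<open>Second differences of \<open>T(a)\<^sup>k\<close>\<close>

definition tri_diff2 :: "nat \<Rightarrow> nat \<Rightarrow> rat" where
  "tri_diff2 k a = tri (a + 1) ^ k - 2 * tri a ^ k + tri (a - 1) ^ k"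

definition sym_pow :: "nat \<Rightarrow> nat \<Rightarrow> rat" where
  "sym_pow r a = (of_nat a + 1) ^ r + (- of_nat a) ^ r"

lemma sym_pow_Suc_Suc: "sym_pow (Suc (Suc r)) a = sym_pow (Suc r) a + 2 * tri a * sym_pow r a"
proof -
  define s :: rat where "s = of_nat a"
  have "2 * tri a = s * (s + 1)" unfolding tri_def s_def by simp
  then have "sym_pow (Suc (Suc r)) a - sym_pow (Suc r) a - 2 * tri a * sym_pow r a
      = (s + 1) ^ r * ((s + 1) * (s + 1) - (s + 1) - s * (s + 1)) + (- s) ^ r * (s * s + s - s * (s + 1))"
    unfolding sym_pow_def s_def[symmetric] by (simp add: algebra_simps)
  also have "\<dots> = 0" by (simp add: algebra_simps)
  finally show ?thesis by simp
qed

lemma q_tri_span_sym_pow: "q_tri_span (r div 2) (\<lambda>S a. sym_pow r a)"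
proof (induction r rule: less_induct)
  case (less r)
  show ?case
  proof (cases r)
    case 0
    have "q_tri_span 0 (\<lambda>S a. sym_pow 0 a)"
      by (rule q_tri_span_cong[OF q_tri_span_const[OF q_span_const[of 2]]]) (simp add: sym_pow_def)
    then show ?thesis using 0 by simp
  next
    case (Suc r1)
    show ?thesis
    proof (cases r1)
      case 0
      have "q_tri_span 0 (\<lambda>S a. sym_pow 1 a)"
        by (rule q_tri_span_cong[OF q_tri_span_const[OF q_span_const[of 1]]]) (simp add: sym_pow_def)
      then show ?thesis using 0 Suc by simp
    next
      case (Suc r2)
      have A: "q_tri_span (r div 2) (\<lambda>S a. sym_pow (Suc r2) a)"
        by (rule q_tri_span_mono[OF less[of "Suc r2"]]) (use Suc \<open>r = Suc r1\<close> in auto)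
      have "q_tri_span (1 + r2 div 2) (\<lambda>S a. (2 * tri a) * sym_pow r2 a)"
        by (rule q_tri_span_mult[OF q_tri_span_smult[OF q_tri_span_tri] less[of r2]]) (use Suc \<open>r = Suc r1\<close> in auto)
      then have B: "q_tri_span (r div 2) (\<lambda>S a. (2 * tri a) * sym_pow r2 a)" using Suc \<open>r = Suc r1\<close>
        by simp
      show ?thesis
        by (rule q_tri_span_cong[OF q_tri_span_add[OF A B]]) (simp add: Suc \<open>r = Suc r1\<close> sym_pow_Suc_Suc)
    qed
  qed
qed

lemma tri_diff2_expand: "tri_diff2 k a = (\<Sum>r\<in>{1..k}. of_nat (k choose r) * sym_pow r a * tri a ^ (k - r))"
proof -
  have u: "tri (a + 1) ^ k = (\<Sum>r\<le>k. of_nat (k choose r) * (of_nat a + 1) ^ r * tri a ^ (k - r))"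
    unfolding tri_Suc by (rule binomial_ring)
  have d: "tri (a - 1) ^ k = (\<Sum>r\<le>k. of_nat (k choose r) * (- of_nat a) ^ r * tri a ^ (k - r))"
    unfolding tri_pred by (rule binomial_ring)
  have "tri (a + 1) ^ k + tri (a - 1) ^ k = (\<Sum>r\<le>k. of_nat (k choose r) * sym_pow r a * tri a ^ (k - r))"
    unfolding u d sym_pow_def by (simp add: sum.distrib[symmetric] algebra_simps)
  also have "{..k} = insert 0 {1..k}" by auto
  also have "(\<Sum>r\<in>insert 0 {1..k}. of_nat (k choose r) * sym_pow r a * tri a ^ (k - r))
      = 2 * tri a ^ k + (\<Sum>r\<in>{1..k}. of_nat (k choose r) * sym_pow r a * tri a ^ (k - r))"
    by (simp add: sym_pow_def)
  finally show ?thesis unfolding tri_diff2_def by simp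
qed

text \<open>In the binomial expansion of \<open>T(a \<plusminus> 1)\<^sup>k\<close> around \<open>T(a)\<close> the terms \<open>r = 0\<close> cancel
  \<open>2 T(a)\<^sup>k\<close>, and each remaining term has weight \<open>r div 2 + (k - r) \<le> k - 1\<close>.\<close>

lemma q_tri_span_tri_diff2: "1 \<le> k \<Longrightarrow> q_tri_span (k - 1) (\<lambda>S a. tri_diff2 k a)"
proof -
  assume k: "1 \<le> k"
  have "q_tri_span (k - 1) (\<lambda>S a. \<Sum>r\<in>{1..k}. of_nat (k choose r) * (sym_pow r a * tri a ^ (k - r)))"
  proof (rule q_tri_span_sum)
    fix r assume r: "r \<in> {1..k}"
    have "q_tri_span (r div 2 + (k - r)) (\<lambda>S a. sym_pow r a * tri a ^ (k - r))"
      by (rule q_tri_span_mult[OF q_tri_span_sym_pow q_tri_span_power[OF q_tri_span_tri]])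
    then have "q_tri_span (k - 1) (\<lambda>S a. sym_pow r a * tri a ^ (k - r))"
      by (rule q_tri_span_mono) (use r in auto)
    then show "q_tri_span (k - 1) (\<lambda>S a. of_nat (k choose r) * (sym_pow r a * tri a ^ (k - r)))"
      by (rule q_tri_span_smult)
  qed simp
  then show ?thesis by (rule q_tri_span_cong) (simp add: tri_diff2_expand mult.assoc)
qed

section \<open>The operator \<open>D\<close> applied to \<open>q\<^sub>\<nu>/H\<close>\<close>

definition q_part_shift :: "nat list \<Rightarrow> nat set \<Rightarrow> nat \<Rightarrow> rat" where
  "q_part_shift nu S a = prod_list (map (\<lambda>k. q_set k S + tri_diff2 k a) nu)"

lemma q_tri_span_q_part_shift: "\<forall>k\<in>set nu. 1 \<le> k \<Longrightarrow> q_tri_span (sum_list nu) (q_part_shift nu)"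
proof (induction nu)
  case Nil
  have "q_tri_span 0 (q_part_shift [])"
    by (rule q_tri_span_cong[OF q_tri_span_const[OF q_span_const[of 1]]]) (simp add: q_part_shift_def)
  then show ?case by simp
next
  case (Cons k nu)
  have factor: "q_tri_span k (\<lambda>S a. q_set k S + tri_diff2 k a)"
    by (rule q_tri_span_add[OF q_tri_span_const[OF q_span_q_set] q_tri_span_mono[OF q_tri_span_tri_diff2]]) (use Cons in auto)
  have "q_tri_span (k + sum_list nu) (\<lambda>S a. (q_set k S + tri_diff2 k a) * q_part_shift nu S a)"
    by (rule q_tri_span_mult[OF factor Cons.IH]) (use Cons in auto)
  then have "q_tri_span (k + sum_list nu) (q_part_shift (k # nu))" by (rule q_tri_span_cong) (simp add: q_part_shift_def)
  then show ?case by simp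
qed

lemma q_tri_span_q_part_shift_diff: "\<forall>k\<in>set nu. 1 \<le> k \<Longrightarrow> q_tri_span (sum_list nu - 1) (\<lambda>S a. q_part_shift nu S a - q_part_set nu S)"
proof (induction nu)
  case Nil
  show ?case by (rule q_tri_span_cong[OF q_tri_span_zero]) (simp add: q_part_shift_def q_part_set_def)
next
  case (Cons k nu)
  have k: "1 \<le> k" using Cons by auto
  have eq: "q_part_shift (k # nu) S a - q_part_set (k # nu) S = q_set k S * (q_part_shift nu S a - q_part_set nu S) + tri_diff2 k a * q_part_shift nu S a" for S a
    by (simp add: q_part_shift_def q_part_set_def algebra_simps)
  show ?case
  proof (cases "nu = []")
    case True
    have "q_tri_span (k - 1) (\<lambda>S a. q_part_shift (k # nu) S a - q_part_set (k # nu) S)"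
      by (rule q_tri_span_cong[OF q_tri_span_tri_diff2[OF k]]) (simp add: True q_part_shift_def q_part_set_def)
    then show ?thesis using True by simp
  next
    case False
    have pos: "\<forall>x\<in>set nu. 1 \<le> x" using Cons by auto
    have sum_pos: "1 \<le> sum_list nu" using False pos by (cases nu) auto
    have first: "q_tri_span (k + (sum_list nu - 1)) (\<lambda>S a. q_set k S * (q_part_shift nu S a - q_part_set nu S))"
      by (rule q_tri_span_mult[OF q_tri_span_const[OF q_span_q_set[OF k]] Cons.IH[OF pos]])
    have second: "q_tri_span (k - 1 + sum_list nu) (\<lambda>S a. tri_diff2 k a * q_part_shift nu S a)"
      by (rule q_tri_span_mult[OF q_tri_span_tri_diff2[OF k] q_tri_span_q_part_shift[OF pos]])
    have "q_tri_span (sum_list (k # nu) - 1) (\<lambda>S a. q_set k S * (q_part_shift nu S a - q_part_set nu S) + tri_diff2 k a * q_part_shift nu S a)"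
      by (rule q_tri_span_add; rule q_tri_span_mono[OF first] q_tri_span_mono[OF second]) (use sum_pos k in auto)
    then show ?thesis by (rule q_tri_span_cong) (simp add: eq)
  qed
qed

lemma q_set_add_box:
  assumes S: "S \<in> part_sets" and a: "a \<in> insert 0 S" "a + 1 \<notin> S" and k: "1 \<le> k"
  shows "q_set k (insert (a + 1) (S - {a})) = q_set k S + tri_diff2 k a"
proof -
  have fS: "finite S" and S0: "0 \<notin> S" using S unfolding part_sets_def by auto
  show ?thesis
  proof (cases "a = 0")
    case True
    have "S - {a} = S" using S0 True by auto
    then have "q_set k (insert (a + 1) (S - {a})) = (tri 1 ^ k - tri 0 ^ k) + q_set k S"
      unfolding q_set_def using fS a True by simp
    moreover have "tri 1 = 1" "tri 0 = 0" unfolding tri_def by simp_all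
    ultimately show ?thesis unfolding tri_diff2_def using True k by simp
  next
    case False
    then have aS: "a \<in> S" using a by auto
    have "q_set k S = (tri a ^ k - tri (a - 1) ^ k) + q_set k (S - {a})"
      unfolding q_set_def using sum.remove[OF fS aS] .
    moreover have "q_set k (insert (a + 1) (S - {a})) = (tri (a + 1) ^ k - tri (a + 1 - 1) ^ k) + q_set k (S - {a})"
      unfolding q_set_def using fS a by simp
    ultimately show ?thesis unfolding tri_diff2_def by simp
  qed
qed

lemma q_part_set_add_box:
  assumes "S \<in> part_sets" "a \<in> insert 0 S" "a + 1 \<notin> S" "\<forall>k\<in>set nu. 1 \<le> k"
  shows "q_part_set nu (insert (a + 1) (S - {a})) = q_part_shift nu S a"
  unfolding q_part_set_def q_part_shift_def using q_set_add_box[OF assms(1-3)] assms(4)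
  by (intro arg_cong[of _ _ prod_list] map_cong) auto

lemma prod_lessThan_length_nth: "(\<Prod>j<length d. f (d ! j)) = prod_list (map f d)"
  by (induction d) (simp_all del: prod.lessThan_Suc add: prod.lessThan_Suc_shift)

lemma q_part_eq_q_part_set:
  assumes "strict_partition l" "int_partition d"
  shows "q_part d l = q_part_set d (set l)"
proof -
  have "q_part d l = prod_list (map (\<lambda>k. q k l) d)" unfolding Defs.q_part_def by (rule prod_lessThan_length_nth)
  also have "\<dots> = prod_list (map (\<lambda>k. q_set k (set l)) d)"
    using assms q_eq_q_set unfolding Defs.int_partition_def
      by (intro arg_cong[of _ _ prod_list] map_cong) (auto simp: Suc_le_eq)
  finally show ?thesis unfolding q_part_set_def .
qed

lemma set_in_part_sets: "strict_partition l \<Longrightarrow> set l \<in> part_sets"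
  unfolding part_sets_def Defs.strict_partition_def by auto

lemma Dop_q_part_div_H:
  assumes sp: "strict_partition lam" and nu: "int_partition nu"
  shows "Dop (\<lambda>mu. q_part nu mu / H mu) lam
       = (\<Sum>a\<in>insert 0 (set lam). residue (set lam) a * (q_part_shift nu (set lam) a - q_part_set nu (set lam)))
           / H_set (set lam)"
proof -
  define S where "S = set lam"
  define A where "A = {a \<in> insert 0 S. a + 1 \<notin> S}"
  define S' where "S' a = insert (a + 1) (S - {a})" for a
  have S: "S \<in> part_sets" unfolding S_def by (rule set_in_part_sets[OF sp])
  then have fin: "finite S" and S0: "0 \<notin> S" unfolding part_sets_def by auto
  have pos: "\<forall>k\<in>set nu. 1 \<le> k" using nu unfolding Defs.int_partition_def by (auto simp: Suc_le_eq)
  have "Dop (\<lambda>mu. q_part nu mu / H mu) lam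
      = (\<Sum>a\<in>A. (if a = 0 then 1 else 2) * (q_part_set nu (S' a) / H_set (S' a))) - q_part_set nu S / H_set S"
    unfolding A_def S_def S'_def
    by (rule Dop_eq_sum_set[OF sp]) (simp add: q_part_eq_q_part_set[OF _ nu] H_eq_H_set)
  also have "(\<Sum>a\<in>A. (if a = 0 then 1 else 2) * (q_part_set nu (S' a) / H_set (S' a)))
      = (\<Sum>a\<in>A. residue S a * q_part_shift nu S a / H_set S)"
  proof (rule sum.cong)
    fix a assume a: "a \<in> A"
    have "residue S a = (if a = 0 then 1 else 2) * H_set S / H_set (S' a)"
      using residue_eq_H_set_ratio[OF fin S0] a unfolding A_def S'_def by auto
    moreover have "q_part_set nu (S' a) = q_part_shift nu S a"
      using q_part_set_add_box[OF S _ _ pos] a unfolding A_def S'_def by auto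
    ultimately show "(if a = 0 then 1 else 2) * (q_part_set nu (S' a) / H_set (S' a))
        = residue S a * q_part_shift nu S a / H_set S"
      using H_set_pos[OF fin] by simp
  qed simp
  also have "\<dots> = (\<Sum>a\<in>insert 0 S. residue S a * q_part_shift nu S a / H_set S)"
    by (rule sum.mono_neutral_left) (use fin residue_eq_0[OF fin] in \<open>auto simp: A_def\<close>)
  also have "q_part_set nu S / H_set S = (\<Sum>a\<in>insert 0 S. residue S a * q_part_set nu S / H_set S)"
    using sum_residue[OF S] by (simp add: sum_distrib_right[symmetric] sum_divide_distrib[symmetric])
  finally show ?thesis
    unfolding S_def[symmetric]
      by (simp add: sum_subtractf[symmetric] sum_divide_distrib right_diff_distrib diff_divide_distrib)
qed

lemma q_span_Dop_numerator:
  assumes "int_partition nu"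
  shows "q_span (sum_list nu - 1) (\<lambda>S. \<Sum>a\<in>insert 0 S. residue S a * (q_part_shift nu S a - q_part_set nu S))"
proof -
  have "\<forall>k\<in>set nu. 1 \<le> k" using assms unfolding Defs.int_partition_def by (auto simp: Suc_le_eq)
  then show ?thesis by (rule q_span_sum_residue[OF q_tri_span_q_part_shift_diff])
qed

theorem theorem3p6:
  fixes nu :: "nat list"
  assumes "int_partition nu"
  shows "\<exists>xi :: nat list \<Rightarrow> rat. \<forall>lam. strict_partition lam \<longrightarrow>
           Dop (\<lambda>mu. q_part nu mu / H mu) lam
         = (\<Sum>delta\<in>{delta. int_partition delta \<and> int (sum_list delta) \<le> int (sum_list nu) - 1}.
              xi delta * (q_part delta lam / H lam))"
proof -
  obtain xi where xi: "\<forall>S\<in>part_sets. (\<Sum>a\<in>insert 0 S. residue S a * (q_part_shift nu S a - q_part_set nu S))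
      = (\<Sum>d\<in>partitions_upto (sum_list nu - 1). xi d * q_part_set d S)"
    using q_span_Dop_numerator[OF assms] unfolding q_span_def by blast
  show ?thesis
  proof (intro exI[of _ xi] allI impI)
    fix lam assume sp: "strict_partition lam"
    note Dop = Dop_q_part_div_H[OF sp assms]
    show "Dop (\<lambda>mu. q_part nu mu / H mu) lam
         = (\<Sum>delta\<in>{delta. int_partition delta \<and> int (sum_list delta) \<le> int (sum_list nu) - 1}.
              xi delta * (q_part delta lam / H lam))"
    proof (cases "nu = []")
      case True
      text \<open>Here the bound \<open>|\<nu>| - 1 = -1\<close> admits no \<open>\<delta>\<close>, unlike the truncated \<open>sum_list nu - 1 = 0\<close>.\<close>
      then show ?thesis using Dop by (simp add: q_part_shift_def q_part_set_def)
    next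
      case False
      then have "1 \<le> sum_list nu" using assms by (cases nu) (auto simp: Defs.int_partition_def)
      then have "{delta. int_partition delta \<and> int (sum_list delta) \<le> int (sum_list nu) - 1}
          = partitions_upto (sum_list nu - 1)"
        unfolding partitions_upto_def by auto
      moreover have "Dop (\<lambda>mu. q_part nu mu / H mu) lam
          = (\<Sum>d\<in>partitions_upto (sum_list nu - 1). xi d * q_part_set d (set lam)) / H_set (set lam)"
        using Dop xi set_in_part_sets[OF sp] by simp
      ultimately show ?thesis
        by (simp add: sum_divide_distrib q_part_eq_q_part_set[OF sp] H_eq_H_set[OF sp] partitions_upto_def)
    qed
  qed
qed

end
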